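(* Let $\Omega\subset\mathbb{R}^n$ be a domain with $\mathrm{width}(\Omega)<+\infty$, $f\in L^\infty(\Omega)$, $g\in C(\partial\Omega)\cap L^\infty(\partial\Omega)$, $(\varepsilon_i)$ a sequence of positive numbers with $\varepsilon_i\to0$, and for each $i$ let $u_i:\overline\Omega\to\mathbb{R}$ be a bounded solution of $\Delta^{\varepsilon_i}_\infty u_i=\varepsilon_i^2 f$ in $\Omega$, $u_i=g$ on $\partial\Omega$. Then for every $y_0\in\partial\Omega$ and every $\varepsilon>0$ there exist $\delta>0$ and $N\in\mathbb{N}$ such that for all $x\in\Omega$ with $d(y_0,x)\le\delta$ and all $i>N$, \[ |u_i(x)-g(y_0)|\le\varepsilon. \]
   Context: $d(x,y)$ is the intrinsic metric of $\overline\Omega$ (infimum of lengths of paths in $\overline\Omega$ from $x$ to $y$); $\mathrm{width}(\Omega)=\sup_{x\in\Omega}\inf_{y\in\partial\Omega}d(y,x)$. For $\varepsilon>0$, $B_x(\varepsilon)=\{y\in\overline\Omega: d(x,y)<\varepsilon\}$ and $\Delta^{\varepsilon}_\infty w(x)=\inf_{y\in B_x(\varepsilon)}w(y)+\sup_{y\in B_x(\varepsilon)}w(y)-2w(x)$. *)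

theory Defs
  imports "HOL-Analysis.Analysis"
begin

definition path_len :: "(real \<Rightarrow> 'a::metric_space) \<Rightarrow> ereal" where
  "path_len \<gamma> = (SUP p \<in> {(n::nat, t::nat \<Rightarrow> real). t 0 = 0 \<and> t n = 1 \<and> (\<forall>k<n. t k \<le> t (Suc k))}.
      ereal (\<Sum>k<fst p. dist (\<gamma> (snd p (Suc k))) (\<gamma> (snd p k))))"

text \<open>Intrinsic metric of a set S: infimum of lengths of paths in S from x to y (+\<infinity> if none).\<close>
definition intrinsic_dist :: "'a::metric_space set \<Rightarrow> 'a \<Rightarrow> 'a \<Rightarrow> ereal" where
  "intrinsic_dist S x y = (INF \<gamma> \<in> {\<gamma>. path \<gamma> \<and> path_image \<gamma> \<subseteq> S \<and> pathstart \<gamma> = x \<and> pathfinish \<gamma> = y}.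
      path_len \<gamma>)"

definition width :: "'a::metric_space set \<Rightarrow> ereal" where
  "width \<Omega> = (SUP x \<in> \<Omega>. INF y \<in> frontier \<Omega>. intrinsic_dist (closure \<Omega>) y x)"

definition iball :: "'a::metric_space set \<Rightarrow> 'a \<Rightarrow> real \<Rightarrow> 'a set" where
  "iball \<Omega> x e = {y \<in> closure \<Omega>. intrinsic_dist (closure \<Omega>) x y < ereal e}"

definition eps_inf_laplacian :: "'a::metric_space set \<Rightarrow> real \<Rightarrow> ('a \<Rightarrow> real) \<Rightarrow> 'a \<Rightarrow> real" where
  "eps_inf_laplacian \<Omega> e w x =
     (INF y \<in> iball \<Omega> x e. w y) + (SUP y \<in> iball \<Omega> x e. w y) - 2 * w x"

end

theory Submission
  imports Defs
begin

text \<open>A barrier argument. A bounded \<open>u\<^sub>0\<close> already bounds \<open>f\<close> from below, since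
  \<open>\<bar>\<Delta>\<^sup>\<epsilon>\<^sub>\<infinity> w\<bar> \<le> 4 sup \<bar>w\<bar>\<close>; nothing else about \<open>f\<close>, and no connectedness of \<open>\<Omega>\<close>, is needed.
  For the upper estimate at \<open>y\<^sub>0 \<in> \<partial>\<Omega>\<close>, \<open>u\<^sub>i\<close> is compared with \<open>min v\<^sub>1 v\<^sub>2\<close>, where
  \<open>v\<^sub>1 = c + A \<phi>\<^sub>r(d(y\<^sub>0, \<cdot>))\<close> is steep near \<open>y\<^sub>0\<close>, \<open>v\<^sub>2 = G + \<kappa> \<phi>\<^sub>P(d(\<partial>\<Omega>, \<cdot>))\<close> dominates \<open>g\<close>
  on all of \<open>\<partial>\<Omega>\<close>, and \<open>\<phi>\<^sub>P(t) = 2 P t - t\<^sup>2\<close>. Inside an intrinsic \<open>\<epsilon>\<close>-ball an intrinsic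
  distance rises by at most \<open>\<epsilon>\<close> and, walking back along a nearly shortest path, falls by almost
  \<open>\<epsilon>\<close>; concavity of \<open>\<phi>\<close> then makes \<open>min v\<^sub>1 v\<^sub>2\<close> a strict supersolution, and the comparison
  principle gives \<open>u\<^sub>i \<le> v\<^sub>1\<close>, which is close to \<open>g(y\<^sub>0)\<close> near \<open>y\<^sub>0\<close> once \<open>\<epsilon>\<^sub>i\<close> is small.
  The lower estimate is the upper one for \<open>-u\<^sub>i\<close>. Walking back along a path uses that the
  length of its final piece varies continuously.\<close>

section \<open>Variation of a path\<close>

definition partitions :: "real \<Rightarrow> real \<Rightarrow> (nat \<times> (nat \<Rightarrow> real)) set" where
  "partitions a b = {(n, t). t 0 = a \<and> t n = b \<and> (\<forall>k<n. t k \<le> t (Suc k))}"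

definition partition_sum :: "(real \<Rightarrow> 'a::metric_space) \<Rightarrow> nat \<times> (nat \<Rightarrow> real) \<Rightarrow> real" where
  "partition_sum \<gamma> p = (\<Sum>k<fst p. dist (\<gamma> (snd p (Suc k))) (\<gamma> (snd p k)))"

definition variation :: "(real \<Rightarrow> 'a::metric_space) \<Rightarrow> real \<Rightarrow> real \<Rightarrow> ereal" where
  "variation \<gamma> a b = (SUP p \<in> partitions a b. ereal (partition_sum \<gamma> p))"

lemma path_len_eq_variation: "path_len \<gamma> = variation \<gamma> 0 1"
  unfolding path_len_def variation_def partitions_def partition_sum_def by simp

lemma partitions_mono:
  assumes "(n, t) \<in> partitions a b" "i \<le> j" "j \<le> n"
  shows "t i \<le> t j"
  using assms(2,3)
proof (induction j)
  case (Suc j)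
  show ?case
  proof (cases "i = Suc j")
    case False
    then have "t i \<le> t j" using Suc by simp
    also have "t j \<le> t (Suc j)" using assms(1) Suc(3) unfolding partitions_def by auto
    finally show ?thesis .
  qed simp
qed simp

lemma partitions_range:
  assumes "(n, t) \<in> partitions a b" "k \<le> n"
  shows "a \<le> t k" "t k \<le> b"
  using partitions_mono[OF assms(1), of 0 k] partitions_mono[OF assms(1), of k n] assms
  unfolding partitions_def by auto

lemma trivial_partition: "a \<le> b \<Longrightarrow> (1, \<lambda>k. if k = 0 then a else b) \<in> partitions a b"
  unfolding partitions_def by auto

lemma partition_sum_cong:
  "(\<And>k. k \<le> n \<Longrightarrow> \<gamma> (t k) = \<gamma>' (s k)) \<Longrightarrow> partition_sum \<gamma> (n, t) = partition_sum \<gamma>' (n, s)"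
  unfolding partition_sum_def by (intro sum.cong) auto

lemma partition_sum_le_variation:
  "p \<in> partitions a b \<Longrightarrow> ereal (partition_sum \<gamma> p) \<le> variation \<gamma> a b"
  unfolding variation_def by (rule SUP_upper)

lemma variation_leI:
  "(\<And>p. p \<in> partitions a b \<Longrightarrow> ereal (partition_sum \<gamma> p) \<le> c) \<Longrightarrow> variation \<gamma> a b \<le> c"
  unfolding variation_def by (rule SUP_least)

lemma dist_le_variation: "a \<le> b \<Longrightarrow> ereal (dist (\<gamma> a) (\<gamma> b)) \<le> variation \<gamma> a b"
  using partition_sum_le_variation[OF trivial_partition, of a b \<gamma>]
  by (simp add: partition_sum_def dist_commute)

lemma variation_nonneg: "a \<le> b \<Longrightarrow> 0 \<le> variation \<gamma> a b"
  using dist_le_variation[of a b \<gamma>] by (metis ereal_less_eq(5) order_trans zero_le_dist)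

lemma variation_refl: "variation \<gamma> a a = 0"
proof -
  have "variation \<gamma> a a \<le> 0"
  proof (rule variation_leI)
    fix p assume p: "p \<in> partitions a a"
    obtain n t where pt: "p = (n, t)" by fastforce
    have "\<And>k. k \<le> n \<Longrightarrow> t k = a" using partitions_range[OF p[unfolded pt]] by (meson antisym)
    then show "ereal (partition_sum \<gamma> p) \<le> 0" unfolding pt partition_sum_def by simp
  qed
  then show ?thesis using variation_nonneg[of a a \<gamma>] by simp
qed

lemma partition_concat:
  assumes p1: "(n1, t1) \<in> partitions a b" and p2: "(n2, t2) \<in> partitions b c"
  defines "t \<equiv> \<lambda>k. if k \<le> n1 then t1 k else t2 (k - n1)"
  shows "(n1 + n2, t) \<in> partitions a c"
    and "partition_sum \<gamma> (n1 + n2, t) = partition_sum \<gamma> (n1, t1) + partition_sum \<gamma> (n2, t2)"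
proof -
  have e1: "t1 0 = a" "t1 n1 = b" "\<forall>k<n1. t1 k \<le> t1 (Suc k)" using p1 unfolding partitions_def by auto
  have e2: "t2 0 = b" "t2 n2 = c" "\<forall>k<n2. t2 k \<le> t2 (Suc k)" using p2 unfolding partitions_def by auto
  have shift: "t (n1 + k) = t2 k" for k using e1 e2 unfolding t_def by (cases k) auto
  have "t k \<le> t (Suc k)" if k: "k < n1 + n2" for k
  proof (cases "k < n1")
    case True then show ?thesis using e1 unfolding t_def by auto
  next
    case False
    then obtain j where "k = n1 + j" "j < n2" using k by (metis add_less_cancel_left le_Suc_ex not_less)
    then show ?thesis using shift[of j] shift[of "Suc j"] e2 by simp
  qed
  moreover have "t 0 = a" "t (n1 + n2) = c" using e1 e2 shift[of n2] unfolding t_def by auto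
  ultimately show "(n1 + n2, t) \<in> partitions a c" unfolding partitions_def by blast
  have "partition_sum \<gamma> (n1 + n2, t) =
      (\<Sum>k<n1. dist (\<gamma> (t (Suc k))) (\<gamma> (t k))) + (\<Sum>k<n2. dist (\<gamma> (t (n1 + Suc k))) (\<gamma> (t (n1 + k))))"
    unfolding partition_sum_def by (induction n2) (simp_all add: add.assoc)
  also have "(\<Sum>k<n1. dist (\<gamma> (t (Suc k))) (\<gamma> (t k))) = partition_sum \<gamma> (n1, t1)"
    unfolding partition_sum_def t_def by (intro sum.cong) auto
  also have "(\<Sum>k<n2. dist (\<gamma> (t (n1 + Suc k))) (\<gamma> (t (n1 + k)))) = partition_sum \<gamma> (n2, t2)"
    unfolding partition_sum_def shift by simp
  finally show "partition_sum \<gamma> (n1 + n2, t) = partition_sum \<gamma> (n1, t1) + partition_sum \<gamma> (n2, t2)" .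
qed

lemma variation_superadditive:
  assumes "a \<le> b" "b \<le> c"
  shows "variation \<gamma> a b + variation \<gamma> b c \<le> variation \<gamma> a c"
proof -
  have concat: "ereal (partition_sum \<gamma> p1) + ereal (partition_sum \<gamma> p2) \<le> variation \<gamma> a c"
    if "p1 \<in> partitions a b" "p2 \<in> partitions b c" for p1 p2
  proof -
    obtain n1 t1 n2 t2 where p: "p1 = (n1, t1)" "p2 = (n2, t2)" by fastforce
    note concat = partition_concat[OF that[unfolded p]]
    show ?thesis
      using partition_sum_le_variation[OF concat(1), of \<gamma>] unfolding p concat(2)[of \<gamma>] by simp
  qed
  have "variation \<gamma> b c \<noteq> - \<infinity>" using variation_nonneg[OF assms(2), of \<gamma>] by auto
  then have "variation \<gamma> a b + variation \<gamma> b c = (SUP p1\<in>partitions a b. ereal (partition_sum \<gamma> p1) + variation \<gamma> b c)"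
    unfolding variation_def[of \<gamma> a b]
    by (intro SUP_ereal_add_left[symmetric]) (use assms trivial_partition in \<open>auto simp: variation_def\<close>)
  also have "\<dots> \<le> variation \<gamma> a c"
  proof (rule SUP_least)
    fix p1 assume p1: "p1 \<in> partitions a b"
    have "ereal (partition_sum \<gamma> p1) + variation \<gamma> b c
        = (SUP p2\<in>partitions b c. ereal (partition_sum \<gamma> p1) + ereal (partition_sum \<gamma> p2))"
      unfolding variation_def[of \<gamma> b c]
      by (intro SUP_ereal_add_right[symmetric]) (use assms trivial_partition in auto)
    also have "\<dots> \<le> variation \<gamma> a c" using concat p1 by (intro SUP_least) blast
    finally show "ereal (partition_sum \<gamma> p1) + variation \<gamma> b c \<le> variation \<gamma> a c" .
  qed
  finally show ?thesis .
qed

lemma dist_le_clamped_dists: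
  fixes x y b :: real
  assumes "x \<le> y"
  shows "dist (\<gamma> y) (\<gamma> x) \<le> dist (\<gamma> (min y b)) (\<gamma> (min x b)) + dist (\<gamma> (max y b)) (\<gamma> (max x b))"
  using assms dist_triangle[of "\<gamma> y" "\<gamma> x" "\<gamma> b"]
  by (cases "y \<le> b"; cases "x \<le> b") (auto simp: min_def max_def dist_commute add.commute)

lemma partition_clamp:
  assumes "(n, t) \<in> partitions a c" "a \<le> b" "b \<le> c"
  shows "(n, \<lambda>k. min (t k) b) \<in> partitions a b" "(n, \<lambda>k. max (t k) b) \<in> partitions b c"
    and "partition_sum \<gamma> (n, t) \<le> partition_sum \<gamma> (n, \<lambda>k. min (t k) b) + partition_sum \<gamma> (n, \<lambda>k. max (t k) b)"
proof -
  show "(n, \<lambda>k. min (t k) b) \<in> partitions a b" "(n, \<lambda>k. max (t k) b) \<in> partitions b c"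
    using assms unfolding partitions_def by (auto simp: min_def max_def)
  show "partition_sum \<gamma> (n, t) \<le> partition_sum \<gamma> (n, \<lambda>k. min (t k) b) + partition_sum \<gamma> (n, \<lambda>k. max (t k) b)"
    unfolding partition_sum_def fst_conv snd_conv sum.distrib[symmetric]
    by (intro sum_mono dist_le_clamped_dists) (use assms in \<open>auto simp: partitions_def\<close>)
qed

lemma variation_subadditive:
  assumes "a \<le> b" "b \<le> c"
  shows "variation \<gamma> a c \<le> variation \<gamma> a b + variation \<gamma> b c"
proof (rule variation_leI)
  fix p assume p: "p \<in> partitions a c"
  obtain n t where pt: "p = (n, t)" by fastforce
  note clamp = partition_clamp[OF p[unfolded pt] assms]
  have "ereal (partition_sum \<gamma> p)
      \<le> ereal (partition_sum \<gamma> (n, \<lambda>k. min (t k) b)) + ereal (partition_sum \<gamma> (n, \<lambda>k. max (t k) b))"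
    using clamp(3)[of \<gamma>] pt by simp
  also have "\<dots> \<le> variation \<gamma> a b + variation \<gamma> b c"
    using clamp(1,2) by (intro add_mono partition_sum_le_variation)
  finally show "ereal (partition_sum \<gamma> p) \<le> variation \<gamma> a b + variation \<gamma> b c" .
qed

lemma variation_add:
  "a \<le> b \<Longrightarrow> b \<le> c \<Longrightarrow> variation \<gamma> a c = variation \<gamma> a b + variation \<gamma> b c"
  using variation_subadditive variation_superadditive by (blast intro: antisym)

lemma variation_mono_interval:
  assumes "a \<le> s" "s \<le> t" "t \<le> b"
  shows "variation \<gamma> s t \<le> variation \<gamma> a b"
proof -
  have "variation \<gamma> a b = variation \<gamma> a s + (variation \<gamma> s t + variation \<gamma> t b)"
    using variation_add[of a s b \<gamma>] variation_add[of s t b \<gamma>] assms by simp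
  moreover have "variation \<gamma> s t \<le> variation \<gamma> a s + (variation \<gamma> s t + variation \<gamma> t b)"
    using variation_nonneg[of a s \<gamma>] variation_nonneg[of t b \<gamma>] assms
    by (intro add_increasing add_increasing2) auto
  ultimately show ?thesis by simp
qed

lemma variation_reflect_le: "variation \<gamma> (c - b) (c - a) \<le> variation (\<lambda>r. \<gamma> (c - r)) a b"
proof (rule variation_leI)
  fix p assume p: "p \<in> partitions (c - b) (c - a)"
  obtain n t where pt: "p = (n, t)" by fastforce
  have t: "t 0 = c - b" "t n = c - a" "\<And>k. k < n \<Longrightarrow> t k \<le> t (Suc k)"
    using p pt unfolding partitions_def by auto
  have "c - t (n - k) \<le> c - t (n - Suc k)" if "k < n" for k
    using t(3)[of "n - Suc k"] that by (simp add: Suc_diff_Suc)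
  then have q: "(n, \<lambda>k. c - t (n - k)) \<in> partitions a b"
    unfolding partitions_def using t by auto
  have "partition_sum (\<lambda>r. \<gamma> (c - r)) (n, \<lambda>k. c - t (n - k))
      = (\<Sum>k<n. dist (\<gamma> (t (Suc (n - Suc k)))) (\<gamma> (t (n - Suc k))))"
    unfolding partition_sum_def by (intro sum.cong) (auto simp: Suc_diff_Suc dist_commute)
  also have "\<dots> = partition_sum \<gamma> p"
    unfolding partition_sum_def pt using sum.nat_diff_reindex[of "\<lambda>i. dist (\<gamma> (t (Suc i))) (\<gamma> (t i))" n]
    by simp
  finally show "ereal (partition_sum \<gamma> p) \<le> variation (\<lambda>r. \<gamma> (c - r)) a b"
    using partition_sum_le_variation[OF q, of "\<lambda>r. \<gamma> (c - r)"] by simp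
qed

lemma variation_reflect: "variation (\<lambda>r. \<gamma> (c - r)) a b = variation \<gamma> (c - b) (c - a)"
  using variation_reflect_le[of \<gamma> c b a] variation_reflect_le[of "\<lambda>r. \<gamma> (c - r)" c "c - a" "c - b"]
  by simp

lemma partition_sum_two_valued:
  assumes "(n, s) \<in> partitions a b" "\<And>k. k \<le> n \<Longrightarrow> s k = a \<or> s k = b"
  shows "partition_sum \<gamma> (n, s) = dist (\<gamma> b) (\<gamma> a)"
proof -
  define I where "I k = (if s k = b then 1 else 0 :: real)" for k
  have step: "dist (\<gamma> (s (Suc k))) (\<gamma> (s k)) = dist (\<gamma> b) (\<gamma> a) * (I (Suc k) - I k)" if "k < n" for k
    using assms(2)[of k] assms(2)[of "Suc k"] that partitions_mono[OF assms(1), of k "Suc k"]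
      partitions_range[OF assms(1), of 0]
    unfolding I_def by (auto simp: dist_commute)
  have "partition_sum \<gamma> (n, s) = dist (\<gamma> b) (\<gamma> a) * (\<Sum>k<n. I (Suc k) - I k)"
    unfolding partition_sum_def sum_distrib_left by (simp add: step)
  also have "\<dots> = dist (\<gamma> b) (\<gamma> a)"
    unfolding sum_lessThan_telescope using assms(1) by (auto simp: I_def partitions_def)
  finally show ?thesis .
qed

lemma variation_small_right:
  assumes cont: "continuous_on {t..b} \<gamma>" and "t < b" and fin: "variation \<gamma> t b < \<infinity>" and "0 < \<sigma>"
  obtains s where "t < s" "s \<le> b" "variation \<gamma> t s < ereal \<sigma>"
proof -
  obtain V where V: "variation \<gamma> t b = ereal V"
    using fin variation_nonneg[of t b \<gamma>] \<open>t < b\<close> by (cases "variation \<gamma> t b") auto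
  have "ereal (V - \<sigma>/2) < variation \<gamma> t b" using V \<open>0 < \<sigma>\<close> by simp
  then obtain n q where nq: "(n, q) \<in> partitions t b" and close: "V - \<sigma>/2 < partition_sum \<gamma> (n, q)"
    unfolding variation_def less_SUP_iff by fastforce
  define M where "M = q ` {k. k \<le> n \<and> t < q k}"
  define m where "m = Min M"
  have "finite M" "b \<in> M" using nq \<open>t < b\<close> unfolding M_def partitions_def by auto
  then have "m \<in> M" "m \<le> b" unfolding m_def by (auto intro: Min_in)
  then have m: "t < m" "m \<le> b" unfolding M_def by auto
  have m_le: "m \<le> q k" if "k \<le> n" "t < q k" for k
    unfolding m_def using \<open>finite M\<close> that by (auto simp: M_def)
  obtain \<delta> where "0 < \<delta>" and \<delta>: "\<And>x. x \<in> {t..b} \<Longrightarrow> dist x t < \<delta> \<Longrightarrow> dist (\<gamma> x) (\<gamma> t) < \<sigma>/4"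
    using cont \<open>t < b\<close> \<open>0 < \<sigma>\<close> unfolding continuous_on_iff by (metis atLeastAtMost_iff divide_pos_pos
        less_eq_real_def zero_less_numeral)
  define \<tau> where "\<tau> = min m (t + \<delta>/2)"
  have \<tau>: "t < \<tau>" "\<tau> \<le> b" using m \<open>0 < \<delta>\<close> unfolding \<tau>_def by auto
  have near: "dist (\<gamma> \<tau>) (\<gamma> t) < \<sigma>/4" using \<tau> \<open>0 < \<delta>\<close> by (intro \<delta>) (auto simp: \<tau>_def dist_real_def)
  note clamp = partition_clamp[OF nq, of \<tau>]
  \<comment> \<open>every partition point is either \<open>t\<close> or beyond \<open>\<tau>\<close>, so clamping at \<open>\<tau>\<close> leaves a single step\<close>
  have "partition_sum \<gamma> (n, \<lambda>k. min (q k) \<tau>) = dist (\<gamma> \<tau>) (\<gamma> t)"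
  proof (rule partition_sum_two_valued)
    show "(n, \<lambda>k. min (q k) \<tau>) \<in> partitions t \<tau>" using clamp \<tau> by simp
    fix k assume "k \<le> n"
    then show "min (q k) \<tau> = t \<or> min (q k) \<tau> = \<tau>"
      using m_le[of k] partitions_range[OF nq, of k] unfolding \<tau>_def by force
  qed
  moreover have "ereal (partition_sum \<gamma> (n, \<lambda>k. max (q k) \<tau>)) \<le> variation \<gamma> \<tau> b"
    using clamp \<tau> by (intro partition_sum_le_variation) simp
  ultimately have "ereal (V - 3/4 * \<sigma>) \<le> variation \<gamma> \<tau> b"
    using clamp(3)[of \<gamma>] close near \<tau> by (auto intro: order_trans[rotated])
  moreover have "variation \<gamma> t b = variation \<gamma> t \<tau> + variation \<gamma> \<tau> b"
    using \<tau> by (intro variation_add) auto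
  ultimately have "variation \<gamma> t \<tau> < ereal \<sigma>"
    using V variation_nonneg[of t \<tau> \<gamma>] variation_nonneg[of \<tau> b \<gamma>] \<tau> \<open>0 < \<sigma>\<close>
    by (cases "variation \<gamma> t \<tau>"; cases "variation \<gamma> \<tau> b") auto
  then show ?thesis using that \<tau> by blast
qed

lemma variation_small_left:
  assumes cont: "continuous_on {a..t} \<gamma>" and "a < t" and fin: "variation \<gamma> a t < \<infinity>" and "0 < \<sigma>"
  obtains s where "a \<le> s" "s < t" "variation \<gamma> s t < ereal \<sigma>"
proof -
  let ?\<gamma>' = "\<lambda>r. \<gamma> (0 - r)"
  have reflect: "variation ?\<gamma>' x y = variation \<gamma> (- y) (- x)" for x y
    using variation_reflect[of \<gamma> 0 x y] by simp
  have "continuous_on {-t..-a} ?\<gamma>'"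
    by (rule continuous_on_compose2[OF cont continuous_on_op_minus]) auto
  then obtain s where "-t < s" "s \<le> -a" "variation ?\<gamma>' (-t) s < ereal \<sigma>"
    using variation_small_right[of "-t" "-a" ?\<gamma>' \<sigma>] assms reflect by auto
  then show ?thesis using that[of "-s"] reflect[of "-t" s] by simp
qed

lemma variation_small_near_right:
  assumes cont: "continuous_on {a..b} \<gamma>" and fin: "variation \<gamma> a b < \<infinity>"
    and t: "t \<in> {a..b}" and "0 < \<sigma>"
  obtains \<delta> where "0 < \<delta>" "\<And>s. t \<le> s \<Longrightarrow> s \<le> b \<Longrightarrow> s - t < \<delta> \<Longrightarrow> variation \<gamma> t s < ereal \<sigma>"
proof (cases "t < b")
  case True
  have "continuous_on {t..b} \<gamma>" by (rule continuous_on_subset[OF cont]) (use t in auto)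
  moreover have "variation \<gamma> t b < \<infinity>"
    using variation_mono_interval[of a t b b \<gamma>] fin t by auto
  ultimately obtain s where "t < s" "s \<le> b" and s: "variation \<gamma> t s < ereal \<sigma>"
    using variation_small_right True \<open>0 < \<sigma>\<close> by blast
  show ?thesis
  proof (rule that[of "s - t"])
    fix s' assume "t \<le> s'" "s' \<le> b" "s' - t < s - t"
    then have "variation \<gamma> t s' \<le> variation \<gamma> t s" by (intro variation_mono_interval) auto
    then show "variation \<gamma> t s' < ereal \<sigma>" using s by simp
  qed (use \<open>t < s\<close> in simp)
next
  case False
  then show ?thesis using that[of 1] \<open>0 < \<sigma>\<close> t by (force simp: variation_refl)
qed

lemma variation_small_near_left:
  assumes cont: "continuous_on {a..b} \<gamma>" and fin: "variation \<gamma> a b < \<infinity>"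
    and t: "t \<in> {a..b}" and "0 < \<sigma>"
  obtains \<delta> where "0 < \<delta>" "\<And>s. a \<le> s \<Longrightarrow> s \<le> t \<Longrightarrow> t - s < \<delta> \<Longrightarrow> variation \<gamma> s t < ereal \<sigma>"
proof (cases "a < t")
  case True
  have "continuous_on {a..t} \<gamma>" by (rule continuous_on_subset[OF cont]) (use t in auto)
  moreover have "variation \<gamma> a t < \<infinity>"
    using variation_mono_interval[of a a t b \<gamma>] fin t by auto
  ultimately obtain s where "a \<le> s" "s < t" and s: "variation \<gamma> s t < ereal \<sigma>"
    using variation_small_left True \<open>0 < \<sigma>\<close> by blast
  show ?thesis
  proof (rule that[of "t - s"])
    fix s' assume "a \<le> s'" "s' \<le> t" "t - s' < t - s"
    then have "variation \<gamma> s' t \<le> variation \<gamma> s t" by (intro variation_mono_interval) auto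
    then show "variation \<gamma> s' t < ereal \<sigma>" using s by simp
  qed (use \<open>s < t\<close> in simp)
next
  case False
  then show ?thesis using that[of 1] \<open>0 < \<sigma>\<close> t by (force simp: variation_refl)
qed

lemma variation_small_near:
  assumes "continuous_on {a..b} \<gamma>" "variation \<gamma> a b < \<infinity>" and t: "t \<in> {a..b}" and "0 < \<sigma>"
  obtains \<delta> where "0 < \<delta>" "\<And>s. s \<in> {a..b} \<Longrightarrow> \<bar>s - t\<bar> < \<delta> \<Longrightarrow> variation \<gamma> (min s t) (max s t) < ereal \<sigma>"
proof -
  obtain \<delta>1 where "0 < \<delta>1" and right: "\<And>s. t \<le> s \<Longrightarrow> s \<le> b \<Longrightarrow> s - t < \<delta>1 \<Longrightarrow> variation \<gamma> t s < ereal \<sigma>"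
    using variation_small_near_right[OF assms] by blast
  obtain \<delta>2 where "0 < \<delta>2" and left: "\<And>s. a \<le> s \<Longrightarrow> s \<le> t \<Longrightarrow> t - s < \<delta>2 \<Longrightarrow> variation \<gamma> s t < ereal \<sigma>"
    using variation_small_near_left[OF assms] by blast
  show ?thesis
  proof (rule that[of "min \<delta>1 \<delta>2"])
    fix s assume "s \<in> {a..b}" "\<bar>s - t\<bar> < min \<delta>1 \<delta>2"
    then show "variation \<gamma> (min s t) (max s t) < ereal \<sigma>"
      using left[of s] right[of s] t by (cases "s \<le> t") (auto simp: min_def max_def split: if_splits)
  qed (use \<open>0 < \<delta>1\<close> \<open>0 < \<delta>2\<close> in simp)
qed

lemma continuous_on_variation_tail:
  assumes cont: "continuous_on {a..b} \<gamma>" and fin: "variation \<gamma> a b < \<infinity>"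
  shows "continuous_on {a..b} (\<lambda>t. real_of_ereal (variation \<gamma> t b))"
  unfolding continuous_on_iff
proof (intro ballI allI impI)
  fix t e :: real assume t: "t \<in> {a..b}" and "0 < e"
  have diff: "dist (real_of_ereal (variation \<gamma> s b)) (real_of_ereal (variation \<gamma> t b))
      = real_of_ereal (variation \<gamma> (min s t) (max s t))" if "s \<in> {a..b}" for s
  proof -
    have st: "a \<le> min s t" "min s t \<le> max s t" "max s t \<le> b" using that t by auto
    have "variation \<gamma> (min s t) b < \<infinity>"
      using variation_mono_interval[OF st(1) _ order_refl, of b \<gamma>] st fin by auto
    moreover have "variation \<gamma> (min s t) b = variation \<gamma> (min s t) (max s t) + variation \<gamma> (max s t) b"
      using st by (intro variation_add)
    moreover have "0 \<le> variation \<gamma> (min s t) (max s t)" "0 \<le> variation \<gamma> (max s t) b"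
      using st by (auto intro: variation_nonneg)
    moreover have "min s t = s \<and> max s t = t \<or> min s t = t \<and> max s t = s" by auto
    ultimately show ?thesis
      by (cases "variation \<gamma> (min s t) (max s t)"; cases "variation \<gamma> (max s t) b")
        (auto simp: dist_real_def)
  qed
  obtain \<delta> where "0 < \<delta>" and \<delta>: "\<And>s. s \<in> {a..b} \<Longrightarrow> \<bar>s - t\<bar> < \<delta> \<Longrightarrow>
      variation \<gamma> (min s t) (max s t) < ereal e"
    using variation_small_near[OF cont fin t \<open>0 < e\<close>] by blast
  show "\<exists>d>0. \<forall>s\<in>{a..b}. dist s t < d \<longrightarrow>
      dist (real_of_ereal (variation \<gamma> s b)) (real_of_ereal (variation \<gamma> t b)) < e"
  proof (intro exI[of _ \<delta>] conjI ballI impI)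
    fix s assume s: "s \<in> {a..b}" "dist s t < \<delta>"
    then have "variation \<gamma> (min s t) (max s t) < ereal e" using \<delta> by (simp add: dist_real_def)
    then show "dist (real_of_ereal (variation \<gamma> s b)) (real_of_ereal (variation \<gamma> t b)) < e"
      unfolding diff[OF s(1)] using \<open>0 < e\<close> by (cases "variation \<gamma> (min s t) (max s t)") auto
  qed (rule \<open>0 < \<delta>\<close>)
qed

lemma path_len_subpath:
  assumes "a \<le> b"
  shows "path_len (subpath a b \<gamma>) \<le> variation \<gamma> a b"
  unfolding path_len_eq_variation
proof (rule variation_leI)
  fix p assume p: "p \<in> partitions 0 1"
  obtain n t where pt: "p = (n, t)" by fastforce
  have q: "(n, \<lambda>k. (b - a) * t k + a) \<in> partitions a b"
    using p pt assms unfolding partitions_def by (auto intro: mult_left_mono)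
  have "partition_sum (subpath a b \<gamma>) p = partition_sum \<gamma> (n, \<lambda>k. (b - a) * t k + a)"
    unfolding pt by (rule partition_sum_cong) (simp add: subpath_def)
  then show "ereal (partition_sum (subpath a b \<gamma>) p) \<le> variation \<gamma> a b"
    using partition_sum_le_variation[OF q] by simp
qed

lemma path_len_reversepath: "path_len (reversepath \<gamma>) = path_len \<gamma>"
  unfolding path_len_eq_variation reversepath_def using variation_reflect[of \<gamma> 1 0 1] by simp

lemma path_len_joinpaths:
  assumes "pathfinish \<gamma>1 = pathstart \<gamma>2"
  shows "path_len (\<gamma>1 +++ \<gamma>2) \<le> path_len \<gamma>1 + path_len \<gamma>2"
proof -
  let ?j = "\<gamma>1 +++ \<gamma>2"
  have j1: "?j x = \<gamma>1 (2 * x)" if "x \<le> 1/2" for x using that by (simp add: joinpaths_def)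
  have j2: "?j x = \<gamma>2 (2 * x - 1)" if "1/2 \<le> x" for x
  proof (cases "x = 1/2")
    case True
    show ?thesis unfolding True using assms by (simp add: joinpaths_def pathfinish_def pathstart_def)
  qed (use that in \<open>simp add: joinpaths_def\<close>)
  have A: "variation ?j 0 (1/2) \<le> path_len \<gamma>1"
    unfolding path_len_eq_variation
  proof (rule variation_leI)
    fix p assume p: "p \<in> partitions 0 (1/2)"
    obtain n t where pt: "p = (n, t)" by fastforce
    have q: "(n, \<lambda>k. 2 * t k) \<in> partitions 0 1" using p pt unfolding partitions_def by auto
    have "partition_sum ?j p = partition_sum \<gamma>1 (n, \<lambda>k. 2 * t k)"
      unfolding pt by (rule partition_sum_cong) (use partitions_range[OF p[unfolded pt]] j1 in auto)
    then show "ereal (partition_sum ?j p) \<le> variation \<gamma>1 0 1" using partition_sum_le_variation[OF q] by simp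
  qed
  have B: "variation ?j (1/2) 1 \<le> path_len \<gamma>2"
    unfolding path_len_eq_variation
  proof (rule variation_leI)
    fix p assume p: "p \<in> partitions (1/2) 1"
    obtain n t where pt: "p = (n, t)" by fastforce
    have q: "(n, \<lambda>k. 2 * t k - 1) \<in> partitions 0 1" using p pt unfolding partitions_def by auto
    have "partition_sum ?j p = partition_sum \<gamma>2 (n, \<lambda>k. 2 * t k - 1)"
      unfolding pt by (rule partition_sum_cong) (use partitions_range[OF p[unfolded pt]] j2 in auto)
    then show "ereal (partition_sum ?j p) \<le> variation \<gamma>2 0 1" using partition_sum_le_variation[OF q] by simp
  qed
  have "path_len ?j \<le> variation ?j 0 (1/2) + variation ?j (1/2) 1"
    unfolding path_len_eq_variation by (rule variation_subadditive) auto
  also have "\<dots> \<le> path_len \<gamma>1 + path_len \<gamma>2" using A B by (rule add_mono)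
  finally show ?thesis .
qed

section \<open>Intrinsic distance\<close>

definition paths_between :: "'a::topological_space set \<Rightarrow> 'a \<Rightarrow> 'a \<Rightarrow> (real \<Rightarrow> 'a) set" where
  "paths_between S x y = {\<gamma>. path \<gamma> \<and> path_image \<gamma> \<subseteq> S \<and> pathstart \<gamma> = x \<and> pathfinish \<gamma> = y}"

lemma intrinsic_dist_paths_between: "intrinsic_dist S x y = (INF \<gamma>\<in>paths_between S x y. path_len \<gamma>)"
  unfolding intrinsic_dist_def paths_between_def by simp

lemma intrinsic_dist_le_path_len: "\<gamma> \<in> paths_between S x y \<Longrightarrow> intrinsic_dist S x y \<le> path_len \<gamma>"
  unfolding intrinsic_dist_paths_between by (rule INF_lower)

lemma intrinsic_dist_less_path_len:
  assumes "intrinsic_dist S x y < c"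
  obtains \<gamma> where "\<gamma> \<in> paths_between S x y" "path_len \<gamma> < c"
  using assms unfolding intrinsic_dist_paths_between INF_less_iff by blast

lemma intrinsic_dist_nonneg: "0 \<le> intrinsic_dist S x y"
  unfolding intrinsic_dist_paths_between path_len_eq_variation
  by (rule INF_greatest) (simp add: variation_nonneg)

lemma intrinsic_dist_refl: 
  assumes "x \<in> S" 
  shows "intrinsic_dist S x x = 0"
proof -
  have "(\<lambda>_. x) \<in> paths_between S x x"
    using assms unfolding paths_between_def path_def pathstart_def pathfinish_def path_image_def by auto
  moreover have "path_len (\<lambda>_::real. x) = 0"
    unfolding path_len_eq_variation using variation_nonneg[of 0 1 "\<lambda>_. x"]
    by (intro antisym variation_leI) (simp_all add: partition_sum_def)
  ultimately show ?thesis
    using intrinsic_dist_le_path_len intrinsic_dist_nonneg by (metis antisym)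
qed

lemma intrinsic_dist_sym: "intrinsic_dist S x y = intrinsic_dist S y x"
proof -
  have le: "intrinsic_dist S a b \<le> intrinsic_dist S b a" for a b
    unfolding intrinsic_dist_paths_between[of S b a]
  proof (rule INF_greatest)
    fix \<gamma> assume "\<gamma> \<in> paths_between S b a"
    then have "reversepath \<gamma> \<in> paths_between S a b" unfolding paths_between_def by auto
    then show "intrinsic_dist S a b \<le> path_len \<gamma>"
      using intrinsic_dist_le_path_len path_len_reversepath by metis
  qed
  show ?thesis using le[of x y] le[of y x] by simp
qed

lemma intrinsic_dist_triangle: "intrinsic_dist S x z \<le> intrinsic_dist S x y + intrinsic_dist S y z"
proof (rule ereal_le_epsilon2)
  fix e :: real assume "0 < e"
  show "intrinsic_dist S x z \<le> intrinsic_dist S x y + intrinsic_dist S y z + ereal e"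
  proof (cases "intrinsic_dist S x y = \<infinity> \<or> intrinsic_dist S y z = \<infinity>")
    case True
    then show ?thesis using intrinsic_dist_nonneg[of S x y] intrinsic_dist_nonneg[of S y z] by auto
  next
    case False
    then obtain a b where ab: "intrinsic_dist S x y = ereal a" "intrinsic_dist S y z = ereal b"
      using intrinsic_dist_nonneg[of S x y] intrinsic_dist_nonneg[of S y z]
      by (cases "intrinsic_dist S x y"; cases "intrinsic_dist S y z") auto
    obtain \<gamma>1 where \<gamma>1: "\<gamma>1 \<in> paths_between S x y" "path_len \<gamma>1 < ereal (a + e/2)"
      using intrinsic_dist_less_path_len[of S x y "a + e/2"] ab \<open>0 < e\<close> by auto
    obtain \<gamma>2 where \<gamma>2: "\<gamma>2 \<in> paths_between S y z" "path_len \<gamma>2 < ereal (b + e/2)"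
      using intrinsic_dist_less_path_len[of S y z "b + e/2"] ab \<open>0 < e\<close> by auto
    have "\<gamma>1 +++ \<gamma>2 \<in> paths_between S x z"
      using \<gamma>1 \<gamma>2 unfolding paths_between_def by (auto simp: path_image_join)
    then have "intrinsic_dist S x z \<le> path_len (\<gamma>1 +++ \<gamma>2)" by (rule intrinsic_dist_le_path_len)
    also have "\<dots> \<le> path_len \<gamma>1 + path_len \<gamma>2"
      using \<gamma>1 \<gamma>2 by (intro path_len_joinpaths) (auto simp: paths_between_def)
    also have "\<dots> \<le> ereal (a + e/2) + ereal (b + e/2)" using \<gamma>1 \<gamma>2 by (intro add_mono) auto
    also have "\<dots> = intrinsic_dist S x y + intrinsic_dist S y z + ereal e" using ab by simp
    finally show ?thesis .
  qed
qed

lemma dist_le_intrinsic_dist: "ereal (dist x y) \<le> intrinsic_dist S x y"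
  unfolding intrinsic_dist_paths_between
proof (rule INF_greatest)
  fix \<gamma> assume "\<gamma> \<in> paths_between S x y"
  then have "x = \<gamma> 0" "y = \<gamma> 1" unfolding paths_between_def pathstart_def pathfinish_def by auto
  then show "ereal (dist x y) \<le> path_len \<gamma>"
    unfolding path_len_eq_variation using dist_le_variation[of 0 1 \<gamma>] by simp
qed

lemma intrinsic_dist_le_variation:
  fixes \<gamma> :: "real \<Rightarrow> 'a::real_normed_vector"
  assumes "path \<gamma>" "path_image \<gamma> \<subseteq> S" "0 \<le> a" "a \<le> b" "b \<le> 1"
  shows "intrinsic_dist S (\<gamma> a) (\<gamma> b) \<le> variation \<gamma> a b"
proof -
  have "subpath a b \<gamma> \<in> paths_between S (\<gamma> a) (\<gamma> b)"
    unfolding paths_between_def using assms path_image_subpath_subset[of a b \<gamma>]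
    by auto
  then have "intrinsic_dist S (\<gamma> a) (\<gamma> b) \<le> path_len (subpath a b \<gamma>)" by (rule intrinsic_dist_le_path_len)
  also have "\<dots> \<le> variation \<gamma> a b" using assms by (intro path_len_subpath)
  finally show ?thesis .
qed

lemma intrinsic_dist_point_on_path:
  fixes \<gamma> :: "real \<Rightarrow> 'a::real_normed_vector"
  assumes \<gamma>: "path \<gamma>" "path_image \<gamma> \<subseteq> S" and L: "path_len \<gamma> = ereal L" and c: "0 \<le> c" "c \<le> L"
  obtains z where "z \<in> S" "intrinsic_dist S (pathstart \<gamma>) z \<le> ereal (L - c)"
    "intrinsic_dist S z (pathfinish \<gamma>) \<le> ereal c"
proof -
  let ?V = "\<lambda>t. real_of_ereal (variation \<gamma> t 1)"
  have "continuous_on {0..1} ?V"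
    using \<gamma>(1) L unfolding path_def path_len_eq_variation by (intro continuous_on_variation_tail) auto
  moreover have "?V 1 = 0" "?V 0 = L" using L by (simp_all add: variation_refl path_len_eq_variation)
  ultimately obtain t where t: "0 \<le> t" "t \<le> 1" "?V t = c"
    using IVT2'[of ?V 1 c 0] c by auto
  have "variation \<gamma> 0 1 = variation \<gamma> 0 t + variation \<gamma> t 1" using t by (intro variation_add)
  then have split: "variation \<gamma> 0 t = ereal (L - c)" "variation \<gamma> t 1 = ereal c"
    using L t variation_nonneg[of 0 t \<gamma>] variation_nonneg[of t 1 \<gamma>] unfolding path_len_eq_variation
    by (cases "variation \<gamma> 0 t"; cases "variation \<gamma> t 1"; simp)+
  show ?thesis
  proof (rule that[of "\<gamma> t"])
    show "\<gamma> t \<in> S" using \<gamma>(2) t unfolding path_image_def by auto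
    show "intrinsic_dist S (pathstart \<gamma>) (\<gamma> t) \<le> ereal (L - c)"
      using intrinsic_dist_le_variation[OF \<gamma> order_refl t(1)] t split unfolding pathstart_def by simp
    show "intrinsic_dist S (\<gamma> t) (pathfinish \<gamma>) \<le> ereal c"
      using intrinsic_dist_le_variation[OF \<gamma> t(1,2) order_refl] split unfolding pathfinish_def by simp
  qed
qed

definition intrinsic_infdist :: "'a::metric_space set \<Rightarrow> 'a set \<Rightarrow> 'a \<Rightarrow> ereal" where
  "intrinsic_infdist S T x = (INF y\<in>T. intrinsic_dist S y x)"

lemma intrinsic_infdist_le: "y \<in> T \<Longrightarrow> intrinsic_infdist S T x \<le> intrinsic_dist S y x"
  unfolding intrinsic_infdist_def by (rule INF_lower)

lemma intrinsic_infdist_singleton [simp]: "intrinsic_infdist S {y} x = intrinsic_dist S y x"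
  unfolding intrinsic_infdist_def by simp

lemma intrinsic_infdist_nonneg: "0 \<le> intrinsic_infdist S T x"
  unfolding intrinsic_infdist_def by (rule INF_greatest) (rule intrinsic_dist_nonneg)

lemma intrinsic_infdist_triangle:
  "intrinsic_infdist S T z \<le> intrinsic_infdist S T x + intrinsic_dist S x z"
proof (cases "T = {}")
  case False
  have "intrinsic_infdist S T z \<le> (INF y\<in>T. intrinsic_dist S y x + intrinsic_dist S x z)"
    unfolding intrinsic_infdist_def using intrinsic_dist_triangle by (intro INF_mono) blast
  also have "\<dots> = intrinsic_infdist S T x + intrinsic_dist S x z"
    unfolding intrinsic_infdist_def using False intrinsic_dist_nonneg[of S x z]
    by (intro INF_ereal_add_left) (auto intro: intrinsic_dist_nonneg)
  finally show ?thesis .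
qed (use intrinsic_dist_nonneg[of S x z] in \<open>simp add: intrinsic_infdist_def top_ereal_def\<close>)

lemma intrinsic_infdist_step_down:
  fixes S :: "'a::real_normed_vector set"
  assumes "T \<subseteq> S" "intrinsic_infdist S T x = ereal \<rho>" "0 < \<epsilon>" "0 < \<eta>"
  obtains z where "z \<in> S" "intrinsic_dist S x z < ereal \<epsilon>"
    "z \<in> T \<or> intrinsic_infdist S T z + ereal \<epsilon> \<le> ereal (\<rho> + \<eta>)"
proof -
  have "intrinsic_infdist S T x < ereal (\<rho> + \<eta>/2)" using assms(2,4) by simp
  then obtain y where y: "y \<in> T" "intrinsic_dist S y x < ereal (\<rho> + \<eta>/2)"
    unfolding intrinsic_infdist_def INF_less_iff by blast
  obtain \<gamma> where \<gamma>: "\<gamma> \<in> paths_between S y x" "path_len \<gamma> < ereal (\<rho> + \<eta>/2)"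
    using y(2) by (rule intrinsic_dist_less_path_len)
  moreover have "0 \<le> path_len \<gamma>" unfolding path_len_eq_variation by (rule variation_nonneg) simp
  ultimately obtain L where L: "path_len \<gamma> = ereal L" "0 \<le> L" "L < \<rho> + \<eta>/2"
    by (cases "path_len \<gamma>") auto
  show ?thesis
  proof (cases "L < \<epsilon>")
    case True
    have "intrinsic_dist S x y < ereal \<epsilon>"
      using intrinsic_dist_le_path_len[OF \<gamma>(1)] intrinsic_dist_sym[of S x y] L True
      by (auto intro: order.strict_trans1)
    then show ?thesis using that y assms(1) by blast
  next
    case False
    \<comment> \<open>walk back from \<open>x\<close> along \<open>\<gamma>\<close> by slightly less than \<open>\<epsilon>\<close>\<close>
    define c where "c = max (\<epsilon>/2) (\<epsilon> - \<eta>/2)"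
    have c: "0 \<le> c" "c \<le> L" "c < \<epsilon>" "\<epsilon> - \<eta>/2 \<le> c"
      using False assms(3,4) unfolding c_def by auto
    have "path \<gamma>" "path_image \<gamma> \<subseteq> S" "pathstart \<gamma> = y" "pathfinish \<gamma> = x"
      using \<gamma>(1) unfolding paths_between_def by auto
    then obtain z where z: "z \<in> S" "intrinsic_dist S y z \<le> ereal (L - c)" "intrinsic_dist S z x \<le> ereal c"
      using intrinsic_dist_point_on_path[OF _ _ L(1) c(1,2)] by metis
    have "intrinsic_dist S x z < ereal \<epsilon>"
      using z(3) c(3) intrinsic_dist_sym[of S x z] by (auto intro: order.strict_trans1)
    moreover have "intrinsic_infdist S T z \<le> ereal (L - c)"
      using intrinsic_infdist_le[OF y(1), of S z] z(2) by (rule order_trans)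
    then have "intrinsic_infdist S T z + ereal \<epsilon> \<le> ereal (\<rho> + \<eta>)"
      using c(4) L(3) by (cases "intrinsic_infdist S T z") auto
    ultimately show ?thesis using that z(1) by blast
  qed
qed

section \<open>The \<open>\<epsilon>\<close>-Laplacian\<close>

lemma iball_subset_closure: "iball \<Omega> x \<epsilon> \<subseteq> closure \<Omega>"
  unfolding iball_def by auto

lemma centre_in_iball: "x \<in> closure \<Omega> \<Longrightarrow> 0 < \<epsilon> \<Longrightarrow> x \<in> iball \<Omega> x \<epsilon>"
  unfolding iball_def using intrinsic_dist_refl[of x "closure \<Omega>"] by (simp add: zero_ereal_def)

lemma bdd_image_iball:
  fixes w :: "'a::metric_space \<Rightarrow> real"
  assumes "bounded (w ` closure \<Omega>)"
  shows "bdd_below (w ` iball \<Omega> x \<epsilon>)" "bdd_above (w ` iball \<Omega> x \<epsilon>)"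
  using bounded_subset[OF assms image_mono[OF iball_subset_closure]]
  by (auto intro: bounded_imp_bdd_below bounded_imp_bdd_above)

lemma eps_inf_laplacian_le:
  fixes w :: "'a::metric_space \<Rightarrow> real"
  assumes "bounded (w ` closure \<Omega>)" "z \<in> iball \<Omega> x \<epsilon>" "\<And>z'. z' \<in> iball \<Omega> x \<epsilon> \<Longrightarrow> w z' \<le> M"
  shows "eps_inf_laplacian \<Omega> \<epsilon> w x \<le> w z + M - 2 * w x"
proof -
  have "(INF y\<in>iball \<Omega> x \<epsilon>. w y) \<le> w z"
    using bdd_image_iball[OF assms(1)] assms(2) by (intro cINF_lower)
  moreover have "(SUP y\<in>iball \<Omega> x \<epsilon>. w y) \<le> M" using assms(2,3) by (intro cSUP_least) auto
  ultimately show ?thesis unfolding eps_inf_laplacian_def by simp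
qed

lemma eps_inf_laplacian_ge:
  fixes w :: "'a::metric_space \<Rightarrow> real"
  assumes "x \<in> closure \<Omega>" "0 < \<epsilon>" "bounded (w ` closure \<Omega>)" "\<And>z. z \<in> closure \<Omega> \<Longrightarrow> \<bar>w z\<bar> \<le> B"
  shows "- 2 * B \<le> eps_inf_laplacian \<Omega> \<epsilon> w x"
proof -
  have x: "x \<in> iball \<Omega> x \<epsilon>" using centre_in_iball assms by blast
  have "- B \<le> (INF y\<in>iball \<Omega> x \<epsilon>. w y)"
    using x assms(4) iball_subset_closure by (intro cINF_greatest) (force simp: abs_le_iff)+
  moreover have "w x \<le> (SUP y\<in>iball \<Omega> x \<epsilon>. w y)" using bdd_image_iball[OF assms(3)] x by (intro cSUP_upper)
  moreover have "\<bar>w x\<bar> \<le> B" using assms by simp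
  ultimately show ?thesis unfolding eps_inf_laplacian_def by linarith
qed

lemma eps_inf_laplacian_uminus:
  "eps_inf_laplacian \<Omega> \<epsilon> (\<lambda>y. - w y) x = - eps_inf_laplacian \<Omega> \<epsilon> w x"
  unfolding eps_inf_laplacian_def Inf_real_def by (simp add: image_image)

lemma eps_inf_laplacian_comparison:
  fixes u v :: "'a::metric_space \<Rightarrow> real"
  assumes "open \<Omega>" "0 < \<epsilon>" "0 < \<theta>"
    and u: "bounded (u ` closure \<Omega>)" and v: "bounded (v ` closure \<Omega>)"
    and boundary: "\<And>y. y \<in> frontier \<Omega> \<Longrightarrow> u y \<le> v y"
    and gap: "\<And>x. x \<in> \<Omega> \<Longrightarrow> eps_inf_laplacian \<Omega> \<epsilon> v x + \<theta> \<le> eps_inf_laplacian \<Omega> \<epsilon> u x"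
    and z: "z \<in> closure \<Omega>"
  shows "u z \<le> v z"
proof (rule ccontr)
  assume "\<not> u z \<le> v z"
  have "bounded ((\<lambda>z. u z - v z) ` closure \<Omega>)"
    using bounded_minus_comp[OF u v] by (simp add: image_image)
  then have bdd: "bdd_above ((\<lambda>z. u z - v z) ` closure \<Omega>)" by (rule bounded_imp_bdd_above)
  define m where "m = (SUP z\<in>closure \<Omega>. u z - v z)"
  have um: "u z' - v z' \<le> m" if "z' \<in> closure \<Omega>" for z' unfolding m_def using bdd that by (intro cSUP_upper)
  have "0 < m" using um[OF z] \<open>\<not> u z \<le> v z\<close> by simp
  define \<eta> where "\<eta> = min m \<theta> / 2"
  have \<eta>: "0 < \<eta>" "2 * \<eta> \<le> \<theta>" using \<open>0 < m\<close> \<open>0 < \<theta>\<close> unfolding \<eta>_def by auto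
  have "m - \<eta> < m" using \<eta> by simp
  then obtain x where x: "x \<in> closure \<Omega>" "m - \<eta> < u x - v x"
    unfolding m_def using less_cSUP_iff[OF _ bdd] z by (metis empty_iff)
  have "x \<notin> frontier \<Omega>" using boundary[of x] x \<eta> unfolding \<eta>_def using \<open>0 < m\<close> by force
  then have "x \<in> \<Omega>" using x(1) \<open>open \<Omega>\<close> by (simp add: frontier_def interior_open)
  let ?B = "iball \<Omega> x \<epsilon>"
  have ne: "?B \<noteq> {}" using centre_in_iball[OF x(1) \<open>0 < \<epsilon>\<close>] by blast
  \<comment> \<open>near a maximum point of \<open>u - v\<close> the \<open>\<epsilon>\<close>-Laplacians differ by at most \<open>2 \<eta>\<close>\<close>
  have "(INF y\<in>?B. u y) - m \<le> (INF y\<in>?B. v y)"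
  proof (rule cINF_greatest[OF ne])
    fix y assume y: "y \<in> ?B"
    have "(INF y\<in>?B. u y) \<le> u y" using bdd_image_iball[OF u] y by (intro cINF_lower)
    then show "(INF y\<in>?B. u y) - m \<le> v y" using um[of y] y iball_subset_closure by force
  qed
  moreover have "(SUP y\<in>?B. u y) \<le> (SUP y\<in>?B. v y) + m"
  proof (rule cSUP_least[OF ne])
    fix y assume y: "y \<in> ?B"
    have "v y \<le> (SUP y\<in>?B. v y)" using bdd_image_iball[OF v] y by (intro cSUP_upper)
    then show "u y \<le> (SUP y\<in>?B. v y) + m" using um[of y] y iball_subset_closure by force
  qed
  ultimately have "eps_inf_laplacian \<Omega> \<epsilon> u x - eps_inf_laplacian \<Omega> \<epsilon> v x < 2 * \<eta>"
    using x(2) unfolding eps_inf_laplacian_def by simp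
  then show False using gap[OF \<open>x \<in> \<Omega>\<close>] \<eta> by simp
qed

section \<open>Barriers\<close>

definition concave_quad :: "real \<Rightarrow> real \<Rightarrow> real" where
  "concave_quad P t = 2 * P * t - t\<^sup>2"

lemma concave_quad_mono: "s \<le> t \<Longrightarrow> t \<le> P \<Longrightarrow> concave_quad P s \<le> concave_quad P t"
proof -
  assume "s \<le> t" "t \<le> P"
  have "concave_quad P t - concave_quad P s = (t - s) * (2 * P - t - s)"
    unfolding concave_quad_def by (simp add: algebra_simps power2_eq_square)
  also have "\<dots> \<ge> 0" using \<open>s \<le> t\<close> \<open>t \<le> P\<close> by (intro mult_nonneg_nonneg) auto
  finally show ?thesis by simp
qed

lemma concave_quad_second_difference:
  assumes "0 \<le> a" "0 < \<eta>" "\<epsilon> \<le> 1" "2 * (P + 1) * \<eta> \<le> \<epsilon>\<^sup>2"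
  shows "concave_quad P (a - \<epsilon> + \<eta>) + concave_quad P (a + \<epsilon>) - 2 * concave_quad P a \<le> - \<epsilon>\<^sup>2"
proof -
  have "concave_quad P (a - \<epsilon> + \<eta>) + concave_quad P (a + \<epsilon>) - 2 * concave_quad P a
      = 2 * P * \<eta> - 2 * \<epsilon>\<^sup>2 - 2 * (a * \<eta>) + 2 * (\<epsilon> * \<eta>) - \<eta> * \<eta>"
    unfolding concave_quad_def by (simp add: algebra_simps power2_eq_square)
  also have "\<dots> \<le> 2 * P * \<eta> - 2 * \<epsilon>\<^sup>2 + 2 * \<eta>"
  proof -
    have "\<epsilon> * \<eta> \<le> \<eta>" "0 \<le> a * \<eta>" "0 \<le> \<eta> * \<eta>"
      using assms mult_right_mono[of \<epsilon> 1 \<eta>] by simp_all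
    then show ?thesis by linarith
  qed
  also have "\<dots> \<le> - \<epsilon>\<^sup>2" using assms(4) by (simp add: algebra_simps)
  finally show ?thesis .
qed

lemma abs_concave_quad_le: "\<bar>t\<bar> \<le> P \<Longrightarrow> \<bar>concave_quad P t\<bar> \<le> 3 * P\<^sup>2"
proof -
  assume t: "\<bar>t\<bar> \<le> P"
  have "\<bar>concave_quad P t\<bar> \<le> 2 * P * \<bar>t\<bar> + \<bar>t\<bar>\<^sup>2"
    unfolding concave_quad_def using t by (simp add: abs_mult abs_triangle_ineq4[THEN order_trans])
  also have "\<dots> \<le> 2 * P * P + P\<^sup>2"
    using t by (intro add_mono mult_left_mono power_mono) auto
  finally show ?thesis by (simp add: power2_eq_square)
qed

lemma concave_quad_ge:
  assumes "0 \<le> R" "R \<le> 1" "0 \<le> \<epsilon>" "\<epsilon> \<le> 1" "- \<epsilon> \<le> t" "t \<le> R"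
  shows "- 3 * \<epsilon> \<le> concave_quad R t"
proof -
  have "- 3 * \<epsilon> \<le> concave_quad R (- \<epsilon>)"
    using assms mult_right_mono[of R 1 \<epsilon>] mult_right_mono[of \<epsilon> 1 \<epsilon>]
    unfolding concave_quad_def by (simp add: power2_eq_square)
  also have "\<dots> \<le> concave_quad R t" using assms by (intro concave_quad_mono)
  finally show ?thesis .
qed

text \<open>By concavity of the profile, a rise of at most \<open>\<epsilon>\<close> and a fall of almost \<open>\<epsilon>\<close> give a
  second difference of at most \<open>- \<epsilon>\<^sup>2\<close>.\<close>
lemma eps_inf_laplacian_concave_profile:
  fixes w \<rho> :: "'a::metric_space \<Rightarrow> real"
  assumes "bounded (w ` closure \<Omega>)" "0 < \<epsilon>" "\<epsilon> \<le> 1" "0 < \<eta>" "\<eta> \<le> \<epsilon>"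
    "2 * (P + 1) * \<eta> \<le> \<epsilon>\<^sup>2" "0 \<le> c" "0 \<le> \<rho> x" "\<rho> x + \<epsilon> \<le> P"
    and w_x: "w x = K + c * concave_quad P (\<rho> x)"
    and w_le: "\<And>z. z \<in> iball \<Omega> x \<epsilon> \<Longrightarrow> w z \<le> K + c * concave_quad P (\<rho> z)"
    and rise: "\<And>z. z \<in> iball \<Omega> x \<epsilon> \<Longrightarrow> \<rho> z \<le> \<rho> x + \<epsilon>"
    and fall: "z0 \<in> iball \<Omega> x \<epsilon>" "\<rho> z0 \<le> \<rho> x - \<epsilon> + \<eta>"
  shows "eps_inf_laplacian \<Omega> \<epsilon> w x \<le> - c * \<epsilon>\<^sup>2"
proof -
  have profile_le: "w z \<le> K + c * concave_quad P s" if "z \<in> iball \<Omega> x \<epsilon>" "\<rho> z \<le> s" "s \<le> P" for z s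
    using w_le[OF that(1)] concave_quad_mono[OF that(2,3)] \<open>0 \<le> c\<close>
    by (meson add_left_mono mult_left_mono order_trans)
  have "eps_inf_laplacian \<Omega> \<epsilon> w x \<le> w z0 + (K + c * concave_quad P (\<rho> x + \<epsilon>)) - 2 * w x"
    using assms by (intro eps_inf_laplacian_le profile_le) auto
  also have "\<dots> \<le> c * (concave_quad P (\<rho> x - \<epsilon> + \<eta>) + concave_quad P (\<rho> x + \<epsilon>) - 2 * concave_quad P (\<rho> x))"
    using profile_le[OF fall] assms unfolding w_x by (simp add: algebra_simps)
  also have "\<dots> \<le> c * (- \<epsilon>\<^sup>2)"
    using assms by (intro mult_left_mono concave_quad_second_difference) auto
  finally show ?thesis by simp
qed

text \<open>Lowering the level by \<open>\<epsilon>\<close> outside \<open>\<Omega>\<close> makes a step from \<open>\<Omega>\<close> into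
  \<open>T \<subseteq> frontier \<Omega>\<close> count as a full step down.\<close>
definition barrier_level :: "'a::metric_space set \<Rightarrow> 'a set \<Rightarrow> real \<Rightarrow> real \<Rightarrow> 'a \<Rightarrow> real" where
  "barrier_level \<Omega> T R \<epsilon> z =
     real_of_ereal (min (intrinsic_infdist (closure \<Omega>) T z) (ereal R)) - (if z \<in> \<Omega> then 0 else \<epsilon>)"

lemma barrier_level_truncation:
  assumes "0 \<le> R"
  shows "ereal (real_of_ereal (min (intrinsic_infdist (closure \<Omega>) T z) (ereal R)))
      = min (intrinsic_infdist (closure \<Omega>) T z) (ereal R)"
  using intrinsic_infdist_nonneg[of "closure \<Omega>" T z] assms
  by (cases "intrinsic_infdist (closure \<Omega>) T z") (auto simp: min_def)

lemma barrier_level_bounds: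
  assumes "0 \<le> R" "0 \<le> \<epsilon>"
  shows "- \<epsilon> \<le> barrier_level \<Omega> T R \<epsilon> z" "barrier_level \<Omega> T R \<epsilon> z \<le> R"
    and "z \<in> \<Omega> \<Longrightarrow> 0 \<le> barrier_level \<Omega> T R \<epsilon> z"
    and "ereal (barrier_level \<Omega> T R \<epsilon> z) \<le> intrinsic_infdist (closure \<Omega>) T z"
proof -
  define a where "a = real_of_ereal (min (intrinsic_infdist (closure \<Omega>) T z) (ereal R))"
  have "ereal a = min (intrinsic_infdist (closure \<Omega>) T z) (ereal R)"
    unfolding a_def by (rule barrier_level_truncation[OF assms(1)])
  then have "0 \<le> ereal a" "ereal a \<le> ereal R" "ereal a \<le> intrinsic_infdist (closure \<Omega>) T z"
    using intrinsic_infdist_nonneg[of "closure \<Omega>" T z] assms(1) by auto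
  then have a: "0 \<le> a" "a \<le> R" "ereal a \<le> intrinsic_infdist (closure \<Omega>) T z" by auto
  have level: "barrier_level \<Omega> T R \<epsilon> z = a - (if z \<in> \<Omega> then 0 else \<epsilon>)"
    unfolding barrier_level_def a_def ..
  show "- \<epsilon> \<le> barrier_level \<Omega> T R \<epsilon> z" "barrier_level \<Omega> T R \<epsilon> z \<le> R"
    "z \<in> \<Omega> \<Longrightarrow> 0 \<le> barrier_level \<Omega> T R \<epsilon> z"
    using a assms unfolding level by auto
  have "ereal (barrier_level \<Omega> T R \<epsilon> z) \<le> ereal a" using assms unfolding level by simp
  then show "ereal (barrier_level \<Omega> T R \<epsilon> z) \<le> intrinsic_infdist (closure \<Omega>) T z"
    using a(3) by (rule order_trans)
qed

lemma barrier_level_lessD: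
  assumes "z \<in> \<Omega>" "barrier_level \<Omega> T R \<epsilon> z < R"
  shows "intrinsic_infdist (closure \<Omega>) T z < ereal R"
proof (rule ccontr)
  assume "\<not> intrinsic_infdist (closure \<Omega>) T z < ereal R"
  then have "min (intrinsic_infdist (closure \<Omega>) T z) (ereal R) = ereal R" by (simp add: min_def)
  then show False using assms unfolding barrier_level_def by simp
qed

lemma barrier_level_rise:
  assumes "0 \<le> R" "0 \<le> \<epsilon>" "x \<in> \<Omega>" "z \<in> iball \<Omega> x \<epsilon>"
  shows "barrier_level \<Omega> T R \<epsilon> z \<le> barrier_level \<Omega> T R \<epsilon> x + \<epsilon>"
proof -
  let ?d = "intrinsic_infdist (closure \<Omega>) T"
  have "intrinsic_dist (closure \<Omega>) x z \<le> ereal \<epsilon>" using assms(4) unfolding iball_def by auto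
  then have "?d z \<le> ?d x + ereal \<epsilon>"
    using intrinsic_infdist_triangle[of "closure \<Omega>" T z x] by (meson add_left_mono order_trans)
  then have "min (?d z) (ereal R) \<le> min (?d x) (ereal R) + ereal \<epsilon>"
  proof (cases "?d x \<le> ereal R")
    case False
    have "min (?d z) (ereal R) \<le> ereal R" by simp
    also have "\<dots> \<le> ereal R + ereal \<epsilon>" using assms(2) by simp
    finally show ?thesis using False by (simp add: min_def)
  qed (use min.cobounded1[of "?d z" "ereal R"] in \<open>simp add: min_def\<close>)
  then have "ereal (real_of_ereal (min (?d z) (ereal R)))
      \<le> ereal (real_of_ereal (min (?d x) (ereal R))) + ereal \<epsilon>"
    by (simp only: barrier_level_truncation[OF assms(1)])
  then have "real_of_ereal (min (?d z) (ereal R)) \<le> real_of_ereal (min (?d x) (ereal R)) + \<epsilon>"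
    by simp
  then show ?thesis using assms(2,3) unfolding barrier_level_def by simp
qed

lemma barrier_level_fall:
  fixes \<Omega> :: "'a::real_normed_vector set"
  assumes "open \<Omega>" "T \<subseteq> frontier \<Omega>" "x \<in> \<Omega>" "intrinsic_infdist (closure \<Omega>) T x < ereal R"
    "0 \<le> R" "0 < \<epsilon>" "0 < \<eta>"
  obtains z where "z \<in> iball \<Omega> x \<epsilon>" "barrier_level \<Omega> T R \<epsilon> z \<le> barrier_level \<Omega> T R \<epsilon> x - \<epsilon> + \<eta>"
proof -
  let ?d = "intrinsic_infdist (closure \<Omega>) T"
  obtain \<rho> where \<rho>: "?d x = ereal \<rho>" "0 \<le> \<rho>" "\<rho> < R"
    using assms(4) intrinsic_infdist_nonneg[of "closure \<Omega>" T x] by (cases "?d x") auto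
  then have level_x: "barrier_level \<Omega> T R \<epsilon> x = \<rho>" unfolding barrier_level_def using assms(3) by simp
  have T: "T \<subseteq> closure \<Omega>" "T \<inter> \<Omega> = {}"
    using assms(1,2) by (auto simp: frontier_def interior_open)
  obtain z where z: "z \<in> closure \<Omega>" "intrinsic_dist (closure \<Omega>) x z < ereal \<epsilon>"
    and "z \<in> T \<or> ?d z + ereal \<epsilon> \<le> ereal (\<rho> + \<eta>)"
    using intrinsic_infdist_step_down[OF T(1) \<rho>(1) assms(6,7)] by blast
  then consider "z \<in> T" | "?d z + ereal \<epsilon> \<le> ereal (\<rho> + \<eta>)" by blast
  then have "barrier_level \<Omega> T R \<epsilon> z \<le> \<rho> - \<epsilon> + \<eta>"
  proof cases
    case 1
    have "?d z \<le> 0" using intrinsic_infdist_le[OF 1, of "closure \<Omega>" z] intrinsic_dist_refl[OF z(1)] by simp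
    then have "?d z = 0" using intrinsic_infdist_nonneg by (rule antisym)
    moreover have "z \<notin> \<Omega>" using 1 T(2) by blast
    ultimately have "barrier_level \<Omega> T R \<epsilon> z = - \<epsilon>"
      unfolding barrier_level_def using assms(5) by (simp add: min_def zero_ereal_def)
    then show ?thesis using \<rho>(2) assms(7) by simp
  next
    case 2
    have "ereal (barrier_level \<Omega> T R \<epsilon> z) + ereal \<epsilon> \<le> ?d z + ereal \<epsilon>"
      using barrier_level_bounds(4)[OF assms(5), of \<epsilon> \<Omega> T z] assms(6) by (intro add_right_mono) auto
    also have "\<dots> \<le> ereal (\<rho> + \<eta>)" by (rule 2)
    finally show ?thesis by simp
  qed
  moreover have "z \<in> iball \<Omega> x \<epsilon>" using z unfolding iball_def by simp
  ultimately show ?thesis using that level_x by simp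
qed

text \<open>The condition \<open>slope\<close> makes the local barrier exceed the global one wherever
  \<open>d(y\<^sub>0, \<cdot>) \<ge> r/2\<close>, so on the boundary the minimum is the local barrier only near \<open>y\<^sub>0\<close>.\<close>
locale boundary_barrier =
  fixes \<Omega> :: "'a::real_normed_vector set" and y0 :: 'a and W r \<epsilon> F G c A :: real
  assumes open_domain: "open \<Omega>" and y0: "y0 \<in> frontier \<Omega>"
    and width: "0 \<le> W" "\<And>x. x \<in> \<Omega> \<Longrightarrow> intrinsic_infdist (closure \<Omega>) (frontier \<Omega>) x < ereal W"
    and radius: "0 < r" "r \<le> 1"
    and step: "0 < \<epsilon>" "\<epsilon> \<le> r / 4"
    and constants: "0 \<le> F" "0 \<le> G" "- G \<le> c"
    and slope: "F + 1 \<le> A" "4 * (G + 3 * (F + 1) * (W + 2)\<^sup>2 + 1) \<le> A * r\<^sup>2"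
begin

definition local_barrier :: "'a \<Rightarrow> real" where
  "local_barrier z = c + 3 * A * \<epsilon> + A * concave_quad r (barrier_level \<Omega> {y0} r \<epsilon> z)"

definition global_barrier :: "'a \<Rightarrow> real" where
  "global_barrier z = G + 3 * (F + 1) * (W + 2)\<^sup>2
     + (F + 1) * concave_quad (W + 2) (barrier_level \<Omega> (frontier \<Omega>) W \<epsilon> z)"

definition barrier :: "'a \<Rightarrow> real" where
  "barrier z = min (local_barrier z) (global_barrier z)"

lemma global_barrier_bounds:
  "G \<le> global_barrier z" "global_barrier z \<le> G + 2 * (3 * (F + 1) * (W + 2)\<^sup>2)"
proof -
  have "\<bar>barrier_level \<Omega> (frontier \<Omega>) W \<epsilon> z\<bar> \<le> W + 2"
    using barrier_level_bounds(1,2)[of W \<epsilon> \<Omega> "frontier \<Omega>" z] width(1) step radius by auto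
  then have "\<bar>concave_quad (W + 2) (barrier_level \<Omega> (frontier \<Omega>) W \<epsilon> z)\<bar> \<le> 3 * (W + 2)\<^sup>2"
    by (rule abs_concave_quad_le)
  then have "\<bar>(F + 1) * concave_quad (W + 2) (barrier_level \<Omega> (frontier \<Omega>) W \<epsilon> z)\<bar> \<le> (F + 1) * (3 * (W + 2)\<^sup>2)"
    using constants(1) by (simp add: abs_mult mult_left_mono)
  also have "\<dots> = 3 * (F + 1) * (W + 2)\<^sup>2" by simp
  finally show "G \<le> global_barrier z" "global_barrier z \<le> G + 2 * (3 * (F + 1) * (W + 2)\<^sup>2)"
    unfolding global_barrier_def abs_le_iff by linarith+
qed

lemma local_barrier_ge: "c \<le> local_barrier z"
proof -
  have "- 3 * \<epsilon> \<le> concave_quad r (barrier_level \<Omega> {y0} r \<epsilon> z)"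
    using barrier_level_bounds(1,2)[of r \<epsilon> \<Omega> "{y0}" z] radius step by (intro concave_quad_ge) auto
  then have "A * (- 3 * \<epsilon>) \<le> A * concave_quad r (barrier_level \<Omega> {y0} r \<epsilon> z)"
    using slope(1) constants(1) by (intro mult_left_mono) auto
  then show ?thesis unfolding local_barrier_def by simp
qed

lemma global_less_local:
  assumes "r / 2 \<le> barrier_level \<Omega> {y0} r \<epsilon> z"
  shows "global_barrier z < local_barrier z"
proof -
  define X where "X = 3 * (F + 1) * (W + 2)\<^sup>2"
  have "concave_quad r (r / 2) \<le> concave_quad r (barrier_level \<Omega> {y0} r \<epsilon> z)"
    using assms barrier_level_bounds(2)[of r \<epsilon> \<Omega> "{y0}" z] radius step by (intro concave_quad_mono) auto
  then have "A * (3 / 4 * r\<^sup>2) \<le> A * concave_quad r (barrier_level \<Omega> {y0} r \<epsilon> z)"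
    using slope(1) constants(1) by (intro mult_left_mono) (auto simp: concave_quad_def power2_eq_square)
  moreover have "3 * G + 3 * X + 3 \<le> A * (3 / 4 * r\<^sup>2)" using slope(2) unfolding X_def by simp
  ultimately have "3 * G + 3 * X + 3 \<le> A * concave_quad r (barrier_level \<Omega> {y0} r \<epsilon> z)" by linarith
  moreover have "0 \<le> 3 * A * \<epsilon>" "0 \<le> X" using slope(1) constants(1) step unfolding X_def by simp_all
  moreover have "global_barrier z \<le> G + 2 * X" using global_barrier_bounds(2)[of z] unfolding X_def by simp
  ultimately show ?thesis using constants(2,3) unfolding local_barrier_def by linarith
qed

lemma bounded_barrier: "bounded (barrier ` S)"
proof -
  have "barrier z \<in> {min c G .. G + 2 * (3 * (F + 1) * (W + 2)\<^sup>2)}" for z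
    using global_barrier_bounds[of z] local_barrier_ge[of z] unfolding barrier_def by auto
  then have "barrier ` S \<subseteq> {min c G .. G + 2 * (3 * (F + 1) * (W + 2)\<^sup>2)}" by blast
  then show ?thesis by (rule bounded_subset[OF bounded_closed_interval])
qed

lemma barrier_on_frontier:
  assumes "y \<in> frontier \<Omega>" "u y \<le> G" "intrinsic_dist (closure \<Omega>) y0 y < ereal r \<Longrightarrow> u y \<le> c"
  shows "u y \<le> barrier y"
proof -
  have "u y \<le> local_barrier y"
  proof (cases "intrinsic_dist (closure \<Omega>) y0 y < ereal r")
    case True
    then show ?thesis using assms(3) local_barrier_ge[of y] by simp
  next
    case False
    have "y \<notin> \<Omega>" using assms(1) open_domain by (auto simp: frontier_def interior_open)
    then have "barrier_level \<Omega> {y0} r \<epsilon> y = r - \<epsilon>"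
      using False unfolding barrier_level_def by (simp add: min_def)
    then have "global_barrier y < local_barrier y" using step by (intro global_less_local) simp
    then show ?thesis using assms(2) global_barrier_bounds(1)[of y] by simp
  qed
  then show ?thesis using assms(2) global_barrier_bounds(1)[of y] unfolding barrier_def by simp
qed


lemma barrier_supersolution:
  assumes "x \<in> \<Omega>"
  shows "eps_inf_laplacian \<Omega> \<epsilon> barrier x \<le> - (F + 1) * \<epsilon>\<^sup>2"
proof -
  define \<eta> where "\<eta> = \<epsilon>\<^sup>2 / (2 * (W + 3))"
  have "\<epsilon> \<le> 1" using step radius by simp
  have "2 * (W + 2 + 1) * \<eta> = \<epsilon>\<^sup>2" unfolding \<eta>_def using width(1) by (simp add: field_simps)
  moreover have "2 * (r + 1) * \<eta> \<le> 2 * (W + 2 + 1) * \<eta>"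
    using radius width(1) step(1) unfolding \<eta>_def by (intro mult_right_mono) auto
  moreover have "0 < \<eta>" "\<eta> \<le> \<epsilon>\<^sup>2" unfolding \<eta>_def using width(1) step(1) by (simp_all add: field_simps)
  moreover have "\<epsilon>\<^sup>2 \<le> \<epsilon>" using step(1) \<open>\<epsilon> \<le> 1\<close> by (simp add: power2_eq_square mult_left_le_one_le)
  ultimately have \<eta>: "0 < \<eta>" "\<eta> \<le> \<epsilon>" "2 * (W + 2 + 1) * \<eta> \<le> \<epsilon>\<^sup>2" "2 * (r + 1) * \<eta> \<le> \<epsilon>\<^sup>2"
    by linarith+
  have bdd: "bounded (barrier ` closure \<Omega>)" by (rule bounded_barrier)
  show ?thesis
  proof (cases "global_barrier x \<le> local_barrier x")
    case True
    let ?\<rho> = "barrier_level \<Omega> (frontier \<Omega>) W \<epsilon>"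
    obtain z0 where "z0 \<in> iball \<Omega> x \<epsilon>" "?\<rho> z0 \<le> ?\<rho> x - \<epsilon> + \<eta>"
      using barrier_level_fall[OF open_domain order_refl assms width(2)[OF assms] width(1) step(1) \<eta>(1)] .
    then show ?thesis
      using True width(1) step(1) \<open>\<epsilon> \<le> 1\<close> \<eta> assms barrier_level_bounds[where \<Omega> = \<Omega> and T = "frontier \<Omega>" and R = W and \<epsilon> = \<epsilon> and z = x]
        constants(1)
      by (intro eps_inf_laplacian_concave_profile[OF bdd, where K = "G + 3 * (F + 1) * (W + 2)\<^sup>2"])
        (auto simp: barrier_def global_barrier_def intro: barrier_level_rise)
  next
    case False
    let ?\<rho> = "barrier_level \<Omega> {y0} r \<epsilon>"
    have "?\<rho> x < r / 2" using global_less_local[of x] False by (meson not_le less_imp_le)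
    then have near: "intrinsic_infdist (closure \<Omega>) {y0} x < ereal r"
      using assms radius(1) by (intro barrier_level_lessD[where \<epsilon> = \<epsilon>]) auto
    obtain z0 where "z0 \<in> iball \<Omega> x \<epsilon>" "?\<rho> z0 \<le> ?\<rho> x - \<epsilon> + \<eta>"
      by (rule barrier_level_fall[OF open_domain _ assms near _ step(1) \<eta>(1)]) (use y0 radius(1) in auto)
    then have "eps_inf_laplacian \<Omega> \<epsilon> barrier x \<le> - A * \<epsilon>\<^sup>2"
      using False \<open>?\<rho> x < r / 2\<close> radius step \<eta> assms barrier_level_bounds[where \<Omega> = \<Omega> and T = "{y0}" and R = r and \<epsilon> = \<epsilon> and z = x]
        slope(1) constants(1)
      by (intro eps_inf_laplacian_concave_profile[OF bdd, where K = "c + 3 * A * \<epsilon>"])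
        (auto simp: barrier_def local_barrier_def intro: barrier_level_rise)
    also have "\<dots> \<le> - (F + 1) * \<epsilon>\<^sup>2" using mult_right_mono[OF slope(1), of "\<epsilon>\<^sup>2"] by (simp add: algebra_simps)
    finally show ?thesis .
  qed
qed

lemma le_local_barrier:
  fixes u :: "'a \<Rightarrow> real"
  assumes "bounded (u ` closure \<Omega>)" and sub: "\<And>x. x \<in> \<Omega> \<Longrightarrow> - F * \<epsilon>\<^sup>2 \<le> eps_inf_laplacian \<Omega> \<epsilon> u x"
    and "\<And>y. y \<in> frontier \<Omega> \<Longrightarrow> u y \<le> G"
    and "\<And>y. y \<in> frontier \<Omega> \<Longrightarrow> intrinsic_dist (closure \<Omega>) y0 y < ereal r \<Longrightarrow> u y \<le> c"
    and "x \<in> closure \<Omega>"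
  shows "u x \<le> local_barrier x"
proof -
  have "u x \<le> barrier x"
  proof (rule eps_inf_laplacian_comparison[OF open_domain step(1) _ assms(1) bounded_barrier])
    show "0 < \<epsilon>\<^sup>2" using step(1) by simp
    show "u y \<le> barrier y" if "y \<in> frontier \<Omega>" for y
      using that assms(3,4) by (intro barrier_on_frontier) auto
    show "eps_inf_laplacian \<Omega> \<epsilon> barrier z + \<epsilon>\<^sup>2 \<le> eps_inf_laplacian \<Omega> \<epsilon> u z" if "z \<in> \<Omega>" for z
      using barrier_supersolution[OF that] sub[OF that] by (simp add: algebra_simps)
  qed (rule assms(5))
  then show ?thesis unfolding barrier_def by simp
qed

lemma local_barrier_le:
  assumes "x \<in> \<Omega>" "intrinsic_dist (closure \<Omega>) y0 x \<le> ereal \<delta>"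
  shows "local_barrier x \<le> c + A * (3 * \<epsilon> + 2 * \<delta>)"
proof -
  let ?\<rho> = "barrier_level \<Omega> {y0} r \<epsilon> x"
  have "0 \<le> ?\<rho>" "ereal ?\<rho> \<le> intrinsic_dist (closure \<Omega>) y0 x"
    using barrier_level_bounds(3,4)[where \<Omega> = \<Omega> and T = "{y0}" and R = r and \<epsilon> = \<epsilon> and z = x]
      assms radius step by auto
  moreover have "ereal ?\<rho> \<le> ereal \<delta>" using calculation(2) assms(2) by (rule order_trans)
  ultimately have "0 \<le> ?\<rho>" "?\<rho> \<le> \<delta>" by auto
  moreover have "2 * r * ?\<rho> \<le> 2 * ?\<rho>" using calculation radius by (intro mult_right_mono) auto
  ultimately have "concave_quad r ?\<rho> \<le> 2 * \<delta>"
    unfolding concave_quad_def using zero_le_power2[of ?\<rho>] by linarith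
  then have "A * concave_quad r ?\<rho> \<le> A * (2 * \<delta>)"
    using slope(1) constants(1) by (intro mult_left_mono) auto
  then show ?thesis unfolding local_barrier_def by (simp add: algebra_simps)
qed


theorem barrier_estimate:
  fixes u :: "'a \<Rightarrow> real"
  assumes "bounded (u ` closure \<Omega>)" "\<And>x. x \<in> \<Omega> \<Longrightarrow> - F * \<epsilon>\<^sup>2 \<le> eps_inf_laplacian \<Omega> \<epsilon> u x"
    and "\<And>y. y \<in> frontier \<Omega> \<Longrightarrow> u y \<le> G"
    and "\<And>y. y \<in> frontier \<Omega> \<Longrightarrow> intrinsic_dist (closure \<Omega>) y0 y < ereal r \<Longrightarrow> u y \<le> c"
    and "x \<in> \<Omega>" "intrinsic_dist (closure \<Omega>) y0 x \<le> ereal \<delta>"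
  shows "u x \<le> c + A * (3 * \<epsilon> + 2 * \<delta>)"
  using le_local_barrier[OF assms(1-4) closure_subset[THEN subsetD, OF assms(5)]]
    local_barrier_le[OF assms(5,6)] by (rule order_trans)

end

section \<open>Boundary regularity\<close>

lemma eps_inf_laplacian_eq_lower_bound:
  fixes u f :: "'a::metric_space \<Rightarrow> real"
  assumes "0 < \<epsilon>" "bounded (u ` closure \<Omega>)"
    and "\<And>x. x \<in> \<Omega> \<Longrightarrow> eps_inf_laplacian \<Omega> \<epsilon> u x = \<epsilon>\<^sup>2 * f x"
  obtains F where "0 \<le> F" "\<And>x. x \<in> \<Omega> \<Longrightarrow> - F \<le> f x"
proof -
  obtain B where B: "\<And>z. z \<in> closure \<Omega> \<Longrightarrow> \<bar>u z\<bar> \<le> B" using assms(2) unfolding bounded_iff by auto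
  show ?thesis
  proof (rule that[of "max 0 (2 * B / \<epsilon>\<^sup>2)"])
    fix x assume "x \<in> \<Omega>"
    then have "- 2 * B \<le> \<epsilon>\<^sup>2 * f x"
      using eps_inf_laplacian_ge[OF _ assms(1,2) B] assms(3) closure_subset by fastforce
    then have "- (2 * B / \<epsilon>\<^sup>2) \<le> f x" using assms(1) by (simp add: field_simps)
    then show "- max 0 (2 * B / \<epsilon>\<^sup>2) \<le> f x" by linarith
  qed simp
qed

lemma width_bound:
  assumes "width \<Omega> < \<infinity>"
  obtains W where "0 \<le> W" "\<And>x. x \<in> \<Omega> \<Longrightarrow> intrinsic_infdist (closure \<Omega>) (frontier \<Omega>) x < ereal W"
proof -
  obtain W where W: "width \<Omega> < ereal W" using ereal_dense2[OF assms] by blast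
  show ?thesis
  proof (rule that[of "max W 0"])
    fix x assume "x \<in> \<Omega>"
    then have "intrinsic_infdist (closure \<Omega>) (frontier \<Omega>) x \<le> width \<Omega>"
      unfolding width_def intrinsic_infdist_def by (rule SUP_upper)
    also have "\<dots> < ereal (max W 0)" using W by (rule order.strict_trans2) simp
    finally show "intrinsic_infdist (closure \<Omega>) (frontier \<Omega>) x < ereal (max W 0)" .
  qed simp
qed

lemma intrinsic_continuity_radius:
  fixes g :: "'a::metric_space \<Rightarrow> real"
  assumes "continuous_on (frontier \<Omega>) g" "y0 \<in> frontier \<Omega>" "0 < e"
  obtains r where "0 < r" "r \<le> 1"
    "\<And>y. y \<in> frontier \<Omega> \<Longrightarrow> intrinsic_dist (closure \<Omega>) y0 y < ereal r \<Longrightarrow> g y \<le> g y0 + e"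
proof -
  obtain r0 where "0 < r0" and r0: "\<And>y. y \<in> frontier \<Omega> \<Longrightarrow> dist y y0 < r0 \<Longrightarrow> dist (g y) (g y0) < e"
    using assms unfolding continuous_on_iff by blast
  show ?thesis
  proof (rule that[of "min r0 1"])
    fix y assume y: "y \<in> frontier \<Omega>" "intrinsic_dist (closure \<Omega>) y0 y < ereal (min r0 1)"
    have "ereal (dist y0 y) < ereal (min r0 1)" using dist_le_intrinsic_dist y(2) by (rule le_less_trans)
    then have "dist y y0 < r0" by (simp add: dist_commute)
    then show "g y \<le> g y0 + e" using r0[OF y(1)] by (simp add: dist_real_def)
  qed (use \<open>0 < r0\<close> in auto)
qed

lemma barrier_slope_choice:
  fixes F G W r :: real
  assumes "0 \<le> F" "0 \<le> G" "0 \<le> W" "0 < r"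
  defines "A \<equiv> F + 1 + 4 * (G + 3 * (F + 1) * (W + 2)\<^sup>2 + 1) / r\<^sup>2"
  shows "F + 1 \<le> A" "4 * (G + 3 * (F + 1) * (W + 2)\<^sup>2 + 1) \<le> A * r\<^sup>2" "0 < A"
proof -
  define K where "K = 4 * (G + 3 * (F + 1) * (W + 2)\<^sup>2 + 1)"
  have "0 \<le> K" "0 < r\<^sup>2" using assms(1-4) unfolding K_def by simp_all
  then have "0 \<le> K / r\<^sup>2" "A * r\<^sup>2 = (F + 1) * r\<^sup>2 + K" "0 \<le> (F + 1) * r\<^sup>2"
    using assms(1) unfolding A_def K_def by (simp_all add: field_simps)
  then show "F + 1 \<le> A" "K \<le> A * r\<^sup>2" "0 < A" using assms(1) unfolding A_def K_def by linarith+
qed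

lemma eps_inf_solutions_upper_bound_near_boundary:
  fixes \<Omega> :: "'a::real_normed_vector set"
    and f g :: "'a \<Rightarrow> real" and eps :: "nat \<Rightarrow> real" and u :: "nat \<Rightarrow> 'a \<Rightarrow> real"
  assumes "open \<Omega>" "width \<Omega> < \<infinity>"
    and g_cont: "continuous_on (frontier \<Omega>) g" and g_bdd: "bounded (g ` frontier \<Omega>)"
    and eps_pos: "\<And>i. 0 < eps i" and eps_lim: "eps \<longlonglongrightarrow> 0"
    and u_bdd: "\<And>i. bounded (u i ` closure \<Omega>)"
    and u_eq: "\<And>i x. x \<in> \<Omega> \<Longrightarrow> eps_inf_laplacian \<Omega> (eps i) (u i) x = (eps i)\<^sup>2 * f x"
    and u_bd: "\<And>i y. y \<in> frontier \<Omega> \<Longrightarrow> u i y = g y"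
    and y0: "y0 \<in> frontier \<Omega>" and "0 < e"
  shows "\<exists>\<delta>>0. \<exists>N::nat. \<forall>x\<in>\<Omega>. \<forall>i>N. intrinsic_dist (closure \<Omega>) y0 x \<le> ereal \<delta> \<longrightarrow> u i x \<le> g y0 + e"
proof -
  obtain F where F: "0 \<le> F" "\<And>x. x \<in> \<Omega> \<Longrightarrow> - F \<le> f x"
    using eps_inf_laplacian_eq_lower_bound[OF eps_pos u_bdd u_eq] by blast
  obtain W where W: "0 \<le> W" "\<And>x. x \<in> \<Omega> \<Longrightarrow> intrinsic_infdist (closure \<Omega>) (frontier \<Omega>) x < ereal W"
    using width_bound[OF assms(2)] by blast
  obtain G where G: "\<And>y. y \<in> frontier \<Omega> \<Longrightarrow> \<bar>g y\<bar> \<le> G" using g_bdd unfolding bounded_iff by auto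
  have G0: "0 \<le> G" "- G \<le> g y0 + e / 2" using G[OF y0] \<open>0 < e\<close> by (simp_all add: abs_le_iff)
  obtain r where r: "0 < r" "r \<le> 1"
    and g_near: "\<And>y. y \<in> frontier \<Omega> \<Longrightarrow> intrinsic_dist (closure \<Omega>) y0 y < ereal r \<Longrightarrow> g y \<le> g y0 + e / 2"
    using intrinsic_continuity_radius[OF g_cont y0, of "e / 2"] \<open>0 < e\<close> by auto
  define A where "A = F + 1 + 4 * (G + 3 * (F + 1) * (W + 2)\<^sup>2 + 1) / r\<^sup>2"
  have A: "F + 1 \<le> A" "4 * (G + 3 * (F + 1) * (W + 2)\<^sup>2 + 1) \<le> A * r\<^sup>2" "0 < A"
    using barrier_slope_choice[OF F(1) G0(1) W(1) r(1)] unfolding A_def by auto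
  have "\<forall>\<^sub>F i in sequentially. eps i < min (r / 4) (e / (12 * A))"
    using eps_lim r A \<open>0 < e\<close> by (intro order_tendstoD) auto
  then obtain N where N: "\<And>i. N \<le> i \<Longrightarrow> eps i < min (r / 4) (e / (12 * A))"
    unfolding eventually_sequentially by blast
  show ?thesis
  proof (intro exI[of _ "e / (8 * A)"] conjI exI[of _ N] ballI allI impI)
    fix x i assume "x \<in> \<Omega>" "N < i" and x: "intrinsic_dist (closure \<Omega>) y0 x \<le> ereal (e / (8 * A))"
    have "eps i < r / 4" "eps i < e / (12 * A)" using N[of i] \<open>N < i\<close> by simp_all
    then have "eps i \<le> r / 4" "A * eps i \<le> e / 12" using A(3) by (simp_all add: field_simps)
    have "boundary_barrier \<Omega> y0 W r (eps i) F G (g y0 + e / 2) A"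
      by (rule boundary_barrier.intro[OF assms(1) y0 W r eps_pos \<open>eps i \<le> r / 4\<close> F(1) G0 A(1,2)])
    then have "u i x \<le> g y0 + e / 2 + A * (3 * eps i + 2 * (e / (8 * A)))"
    proof (rule boundary_barrier.barrier_estimate[OF _ u_bdd _ _ _ \<open>x \<in> \<Omega>\<close> x])
      show "- F * (eps i)\<^sup>2 \<le> eps_inf_laplacian \<Omega> (eps i) (u i) z" if "z \<in> \<Omega>" for z
        using mult_left_mono[OF F(2)[OF that], of "(eps i)\<^sup>2"] u_eq[OF that, of i] by (simp add: mult.commute)
      show "u i y \<le> G" if "y \<in> frontier \<Omega>" for y using G[OF that] u_bd[OF that] by simp
      show "u i y \<le> g y0 + e / 2" if "y \<in> frontier \<Omega>" "intrinsic_dist (closure \<Omega>) y0 y < ereal r" for y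
        using g_near[OF that] u_bd[OF that(1)] by simp
    qed
    also have "\<dots> \<le> g y0 + e" using \<open>A * eps i \<le> e / 12\<close> A(3) by (simp add: algebra_simps)
    finally show "u i x \<le> g y0 + e" .
  qed (use \<open>0 < e\<close> A(3) in simp)
qed

lemma eps_inf_solutions_lower_bound_near_boundary:
  fixes \<Omega> :: "'a::real_normed_vector set"
    and f g :: "'a \<Rightarrow> real" and eps :: "nat \<Rightarrow> real" and u :: "nat \<Rightarrow> 'a \<Rightarrow> real"
  assumes "open \<Omega>" "width \<Omega> < \<infinity>"
    and g_cont: "continuous_on (frontier \<Omega>) g" and g_bdd: "bounded (g ` frontier \<Omega>)"
    and eps_pos: "\<And>i. 0 < eps i" and eps_lim: "eps \<longlonglongrightarrow> 0"
    and u_bdd: "\<And>i. bounded (u i ` closure \<Omega>)"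
    and u_eq: "\<And>i x. x \<in> \<Omega> \<Longrightarrow> eps_inf_laplacian \<Omega> (eps i) (u i) x = (eps i)\<^sup>2 * f x"
    and u_bd: "\<And>i y. y \<in> frontier \<Omega> \<Longrightarrow> u i y = g y"
    and y0: "y0 \<in> frontier \<Omega>" and "0 < e"
  shows "\<exists>\<delta>>0. \<exists>N::nat. \<forall>x\<in>\<Omega>. \<forall>i>N. intrinsic_dist (closure \<Omega>) y0 x \<le> ereal \<delta> \<longrightarrow> g y0 - e \<le> u i x"
proof -
  have g': "continuous_on (frontier \<Omega>) (\<lambda>y. - g y)" using g_cont by (rule continuous_on_minus)
  have g_bdd': "bounded ((\<lambda>y. - g y) ` frontier \<Omega>)"
    using g_bdd bounded_uminus[of "g ` frontier \<Omega>"] by (simp add: image_image)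
  have u_bdd': "bounded ((\<lambda>y. - u i y) ` closure \<Omega>)" for i
    using u_bdd[of i] bounded_uminus[of "u i ` closure \<Omega>"] by (simp add: image_image)
  have u_eq': "eps_inf_laplacian \<Omega> (eps i) (\<lambda>y. - u i y) x = (eps i)\<^sup>2 * - f x" if "x \<in> \<Omega>" for i x
    using u_eq[OF that] by (simp add: eps_inf_laplacian_uminus)
  have u_bd': "- u i y = - g y" if "y \<in> frontier \<Omega>" for i y using u_bd[OF that] by simp
  obtain \<delta> N where "0 < \<delta>" and below: "\<And>x i. x \<in> \<Omega> \<Longrightarrow> N < i \<Longrightarrow>
      intrinsic_dist (closure \<Omega>) y0 x \<le> ereal \<delta> \<Longrightarrow> - u i x \<le> - g y0 + e"
    using eps_inf_solutions_upper_bound_near_boundary[where u = "\<lambda>i y. - u i y" and g = "\<lambda>y. - g y"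
        and f = "\<lambda>y. - f y", OF assms(1,2) g' g_bdd' eps_pos eps_lim u_bdd' u_eq' u_bd' y0 \<open>0 < e\<close>]
    by blast
  show ?thesis
  proof (intro exI[of _ \<delta>] conjI exI[of _ N] ballI allI impI)
    fix x i assume "x \<in> \<Omega>" "N < i" "intrinsic_dist (closure \<Omega>) y0 x \<le> ereal \<delta>"
    from below[OF this] show "g y0 - e \<le> u i x" by linarith
  qed (rule \<open>0 < \<delta>\<close>)
qed

theorem lemma5p4:
  fixes \<Omega> :: "'a::euclidean_space set"
    and f :: "'a \<Rightarrow> real" and g :: "'a \<Rightarrow> real"
    and eps :: "nat \<Rightarrow> real" and u :: "nat \<Rightarrow> 'a \<Rightarrow> real"
  assumes domain: "open \<Omega>" "connected \<Omega>" "\<Omega> \<noteq> {}"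
    and width_fin: "width \<Omega> < \<infinity>"
    and f_meas: "f \<in> borel_measurable (lebesgue_on \<Omega>)"
    and f_Linf: "\<exists>C. AE x in lebesgue. x \<in> \<Omega> \<longrightarrow> \<bar>f x\<bar> \<le> C"
    and g_cont: "continuous_on (frontier \<Omega>) g"
    and g_bdd: "bounded (g ` frontier \<Omega>)"
    and eps_pos: "\<And>i. eps i > 0"
    and eps_lim: "eps \<longlonglongrightarrow> 0"
    and u_bdd: "\<And>i. bounded (u i ` closure \<Omega>)"
    and u_eq: "\<And>i x. x \<in> \<Omega> \<Longrightarrow> eps_inf_laplacian \<Omega> (eps i) (u i) x = (eps i)\<^sup>2 * f x"
    and u_bd: "\<And>i y. y \<in> frontier \<Omega> \<Longrightarrow> u i y = g y"
  shows "\<forall>y0 \<in> frontier \<Omega>. \<forall>e > 0. \<exists>\<delta> > 0. \<exists>N::nat. \<forall>x \<in> \<Omega>. \<forall>i > N.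
           intrinsic_dist (closure \<Omega>) y0 x \<le> ereal \<delta> \<longrightarrow> \<bar>u i x - g y0\<bar> \<le> e"
proof (intro ballI allI impI)
  fix y0 :: 'a and e :: real
  assume y0: "y0 \<in> frontier \<Omega>" and "0 < e"
  obtain \<delta>1 N1 where "0 < \<delta>1" and above: "\<And>x i. x \<in> \<Omega> \<Longrightarrow> N1 < i \<Longrightarrow>
      intrinsic_dist (closure \<Omega>) y0 x \<le> ereal \<delta>1 \<Longrightarrow> u i x \<le> g y0 + e"
    using eps_inf_solutions_upper_bound_near_boundary[OF domain(1) width_fin g_cont g_bdd eps_pos eps_lim
        u_bdd u_eq u_bd y0 \<open>0 < e\<close>] by blast
  obtain \<delta>2 N2 where "0 < \<delta>2" and below: "\<And>x i. x \<in> \<Omega> \<Longrightarrow> N2 < i \<Longrightarrow>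
      intrinsic_dist (closure \<Omega>) y0 x \<le> ereal \<delta>2 \<Longrightarrow> g y0 - e \<le> u i x"
    using eps_inf_solutions_lower_bound_near_boundary[OF domain(1) width_fin g_cont g_bdd eps_pos eps_lim
        u_bdd u_eq u_bd y0 \<open>0 < e\<close>] by blast
  show "\<exists>\<delta>>0. \<exists>N::nat. \<forall>x\<in>\<Omega>. \<forall>i>N. intrinsic_dist (closure \<Omega>) y0 x \<le> ereal \<delta> \<longrightarrow> \<bar>u i x - g y0\<bar> \<le> e"
  proof (intro exI[of _ "min \<delta>1 \<delta>2"] conjI exI[of _ "max N1 N2"] ballI allI impI)
    fix x i assume x: "x \<in> \<Omega>" "max N1 N2 < i" "intrinsic_dist (closure \<Omega>) y0 x \<le> ereal (min \<delta>1 \<delta>2)"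
    have "u i x \<le> g y0 + e" using above[of x i] order_trans[OF x(3)] x(1,2) by simp
    moreover have "g y0 - e \<le> u i x" using below[of x i] order_trans[OF x(3)] x(1,2) by simp
    ultimately show "\<bar>u i x - g y0\<bar> \<le> e" by linarith
  qed (use \<open>0 < \<delta>1\<close> \<open>0 < \<delta>2\<close> in simp)
qed

end
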